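(* Let $(\mathfrak A,\alpha,\omega)$ be a weakly mixing $C^*$-dynamical system with GNS covariant representation $(\mathcal H,\pi,U,\Omega)$ such that the support of $\omega$ in $\mathfrak A^{**}$ is central, and let $0<m_1<m_2$ be natural numbers. Then for every $A\in M\cup M'$, where $M=\pi(\mathfrak A)''$, $$\mathop{\mathrm{s\text{-}lim}}_{N\to\infty}\frac1N\sum_{n=0}^{N-1}U^{nm_1}AU^{nm_2}=\langle A\Omega,\Omega\rangle\,\langle\,\cdot\,,\Omega\rangle\,\Omega,$$ i.e. the limit in the strong operator topology is the operator $\xi\mapsto\langle A\Omega,\Omega\rangle\langle\xi,\Omega\rangle\Omega$.
   Context: A $C^*$-dynamical system $(\mathfrak A,\alpha,\omega)$: $C^*$-algebra $\mathfrak A$, automorphism $\alpha$, $\alpha$-invariant state $\omega$. It is weakly mixing if $\lim_N\frac1N\sum_{n=0}^{N-1}|\omega(A\alpha^n(B))-\omega(A)\omega(B)|=0$ for all $A,B\in\mathfrak A$; equivalently, the $U$-invariant vectors are $\mathbb C\Omega$ and $1$ is the only eigenvalue of $U$. $(\mathcal H,\pi,\Omega)$ is the GNS triple of $\omega$ and $U$ the unitary with $U\pi(A)\Omega=\pi(\alpha(A))\Omega$. $M'$ is the commutant of $M$; central support is equivalent to $\Omega$ being separating for $M$. *)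

theory Defs
  imports "HOL-Analysis.Analysis"
begin

class complex_vector = real_vector +
  fixes scaleC :: "complex \<Rightarrow> 'a \<Rightarrow> 'a" (infixr \<open>*\<^sub>C\<close> 75)
  assumes scaleC_add_right: "a *\<^sub>C (x + y) = a *\<^sub>C x + a *\<^sub>C y"
    and scaleC_add_left: "(a + b) *\<^sub>C x = a *\<^sub>C x + b *\<^sub>C x"
    and scaleC_scaleC: "a *\<^sub>C (b *\<^sub>C x) = (a * b) *\<^sub>C x"
    and scaleC_one: "1 *\<^sub>C x = x"
    and scaleR_scaleC: "scaleR r x = complex_of_real r *\<^sub>C x"

class complex_normed_vector = complex_vector + real_normed_vector +
  assumes norm_scaleC: "norm (a *\<^sub>C x) = cmod a * norm x"

class complex_inner = complex_normed_vector +
  fixes cinner :: "'a \<Rightarrow> 'a \<Rightarrow> complex"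
  assumes cinner_add_left: "cinner (x + y) z = cinner x z + cinner y z"
    and cinner_scaleC_left: "cinner (c *\<^sub>C x) y = c * cinner x y"
    and cinner_commute: "cinner x y = cnj (cinner y x)"
    and cinner_self_norm: "cinner x x = complex_of_real ((norm x)\<^sup>2)"

class chilbert_space = complex_inner + complete_space

class cstar_algebra = real_normed_algebra + complex_normed_vector + banach +
  fixes cstar :: "'a \<Rightarrow> 'a"
  assumes mult_scaleC_left: "(c *\<^sub>C x) * y = c *\<^sub>C (x * y)"
    and mult_scaleC_right: "x * (c *\<^sub>C y) = c *\<^sub>C (x * y)"
    and cstar_cstar: "cstar (cstar x) = x"
    and cstar_add: "cstar (x + y) = cstar x + cstar y"
    and cstar_scaleC: "cstar (c *\<^sub>C x) = cnj c *\<^sub>C cstar x"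
    and cstar_mult: "cstar (x * y) = cstar y * cstar x"
    and cstar_identity: "norm (cstar x * x) = (norm x)\<^sup>2"

definition clinear :: "('a::complex_vector \<Rightarrow> 'b::complex_vector) \<Rightarrow> bool" where
  "clinear f \<longleftrightarrow> (\<forall>x y. f (x + y) = f x + f y) \<and> (\<forall>c x. f (c *\<^sub>C x) = c *\<^sub>C f x)"

definition bounded_clinear :: "('a::complex_normed_vector \<Rightarrow> 'b::complex_normed_vector) \<Rightarrow> bool" where
  "bounded_clinear f \<longleftrightarrow> clinear f \<and> (\<exists>K. \<forall>x. norm (f x) \<le> norm x * K)"

definition commutant :: "('h::complex_normed_vector \<Rightarrow> 'h) set \<Rightarrow> ('h \<Rightarrow> 'h) set" where
  "commutant S = {T. bounded_clinear T \<and> (\<forall>X\<in>S. T \<circ> X = X \<circ> T)}"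

definition separating_vector :: "'h::complex_normed_vector \<Rightarrow> ('h \<Rightarrow> 'h) set \<Rightarrow> bool" where
  "separating_vector \<Omega> S \<longleftrightarrow> (\<forall>T\<in>S. T \<Omega> = 0 \<longrightarrow> T = (\<lambda>_. 0))"

definition is_state :: "('a::cstar_algebra \<Rightarrow> complex) \<Rightarrow> bool" where
  "is_state \<omega> \<longleftrightarrow>
     (\<forall>x y. \<omega> (x + y) = \<omega> x + \<omega> y) \<and> (\<forall>c x. \<omega> (c *\<^sub>C x) = c * \<omega> x) \<and>
     (\<forall>x. \<exists>r\<ge>0. \<omega> (cstar x * x) = complex_of_real r) \<and>
     (\<exists>K. \<forall>x. cmod (\<omega> x) \<le> K * norm x) \<and>
     (SUP x\<in>{x. norm x \<le> 1}. cmod (\<omega> x)) = 1"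

definition star_automorphism :: "('a::cstar_algebra \<Rightarrow> 'a) \<Rightarrow> bool" where
  "star_automorphism \<alpha> \<longleftrightarrow> bij \<alpha> \<and>
     (\<forall>x y. \<alpha> (x + y) = \<alpha> x + \<alpha> y) \<and> (\<forall>c x. \<alpha> (c *\<^sub>C x) = c *\<^sub>C \<alpha> x) \<and>
     (\<forall>x y. \<alpha> (x * y) = \<alpha> x * \<alpha> y) \<and> (\<forall>x. \<alpha> (cstar x) = cstar (\<alpha> x))"

definition cstar_dynamical_system :: "('a::cstar_algebra \<Rightarrow> 'a) \<Rightarrow> ('a \<Rightarrow> complex) \<Rightarrow> bool" where
  "cstar_dynamical_system \<alpha> \<omega> \<longleftrightarrow> star_automorphism \<alpha> \<and> is_state \<omega> \<and> (\<forall>x. \<omega> (\<alpha> x) = \<omega> x)"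

definition weakly_mixing :: "('a::cstar_algebra \<Rightarrow> 'a) \<Rightarrow> ('a \<Rightarrow> complex) \<Rightarrow> bool" where
  "weakly_mixing \<alpha> \<omega> \<longleftrightarrow> (\<forall>A B.
     (\<lambda>N. (\<Sum>n<N. cmod (\<omega> (A * (\<alpha> ^^ n) B) - \<omega> A * \<omega> B)) / real N) \<longlonglongrightarrow> 0)"

definition star_rep :: "('a::cstar_algebra \<Rightarrow> 'h::chilbert_space \<Rightarrow> 'h) \<Rightarrow> bool" where
  "star_rep \<pi> \<longleftrightarrow> (\<forall>A. bounded_clinear (\<pi> A)) \<and>
     (\<forall>A B. \<pi> (A + B) = (\<lambda>x. \<pi> A x + \<pi> B x)) \<and>
     (\<forall>c A. \<pi> (c *\<^sub>C A) = (\<lambda>x. c *\<^sub>C \<pi> A x)) \<and>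
     (\<forall>A B. \<pi> (A * B) = \<pi> A \<circ> \<pi> B) \<and>
     (\<forall>A x y. cinner (\<pi> A x) y = cinner x (\<pi> (cstar A) y))"

definition gns_triple :: "('a::cstar_algebra \<Rightarrow> complex) \<Rightarrow> ('a \<Rightarrow> 'h::chilbert_space \<Rightarrow> 'h) \<Rightarrow> 'h \<Rightarrow> bool" where
  "gns_triple \<omega> \<pi> \<Omega> \<longleftrightarrow> star_rep \<pi> \<and> closure (range (\<lambda>A. \<pi> A \<Omega>)) = UNIV \<and>
     (\<forall>A. \<omega> A = cinner (\<pi> A \<Omega>) \<Omega>)"

definition gns_covariant ::
  "('a::cstar_algebra \<Rightarrow> 'a) \<Rightarrow> ('a \<Rightarrow> complex) \<Rightarrow> ('a \<Rightarrow> 'h::chilbert_space \<Rightarrow> 'h) \<Rightarrow> ('h \<Rightarrow> 'h) \<Rightarrow> 'h \<Rightarrow> bool" where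
  "gns_covariant \<alpha> \<omega> \<pi> U \<Omega> \<longleftrightarrow> gns_triple \<omega> \<pi> \<Omega> \<and>
     bounded_clinear U \<and> surj U \<and> (\<forall>x y. cinner (U x) (U y) = cinner x y) \<and>
     (\<forall>A. U (\<pi> A \<Omega>) = \<pi> (\<alpha> A) \<Omega>)"

end

(* Let c = <A Omega, Omega> and let D be a *-closed set of operators that commutes with A, is
   normalised by U and has Omega as a cyclic vector: D = M' if A is in M (Omega is cyclic for M'
   because it is separating for M), and D = range pi if A is in M'. For X in D, with
   X_j = U^j X U^-j,
     U^(n m1) A U^(n m2) X Omega = c U^(n (m1 + m2)) X Omega + U^(n m1) X_(n m2) (A - c) Omega.
   The first term averages to c <X Omega, Omega> Omega by the mean ergodic theorem for the weakly
   mixing U^(m1 + m2). The second averages to 0 by van der Corput's inequality: its correlations are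
   bounded by |X Omega|^2 |<U^(d m1) (A - c) Omega, (A - c) Omega>|, whose Cesaro means vanish by
   weak mixing because (A - c) Omega is orthogonal to Omega. The averaging operators are uniformly
   bounded and the vectors X Omega are dense, so the limit holds for every vector. *)

theory Submission
  imports Defs
begin

section \<open>Complex inner product spaces\<close>

global_interpretation complex_vector: vector_space "scaleC :: complex \<Rightarrow> 'a \<Rightarrow> 'a::complex_vector"
  by unfold_locales (simp_all add: scaleC_add_right scaleC_add_left scaleC_scaleC scaleC_one)

lemma scaleC_of_real: "complex_of_real r *\<^sub>C x = r *\<^sub>R (x::'a::complex_vector)"
  by (simp add: scaleR_scaleC)

lemma cinner_zero_left [simp]: "cinner 0 (y::'a::complex_inner) = 0"
  by (metis add_cancel_left_left cinner_add_left)

lemma cinner_add_right: "cinner (x::'a::complex_inner) (y + z) = cinner x y + cinner x z"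
  by (metis cinner_commute cinner_add_left complex_cnj_add)

lemma cinner_scaleC_right: "cinner (x::'a::complex_inner) (c *\<^sub>C y) = cnj c * cinner x y"
  by (metis cinner_commute cinner_scaleC_left complex_cnj_mult)

lemma cinner_zero_right [simp]: "cinner (x::'a::complex_inner) 0 = 0"
  by (metis cinner_commute cinner_zero_left complex_cnj_zero)

lemma cinner_diff_left: "cinner (x - y::'a::complex_inner) z = cinner x z - cinner y z"
  by (metis add_diff_cancel cinner_add_left diff_add_cancel)

lemma cinner_diff_right: "cinner (x::'a::complex_inner) (y - z) = cinner x y - cinner x z"
  by (metis add_diff_cancel cinner_add_right diff_add_cancel)

lemma cinner_sum_left: "cinner (sum f A) (y::'a::complex_inner) = (\<Sum>i\<in>A. cinner (f i) y)"
  by (induction A rule: infinite_finite_induct) (simp_all add: cinner_add_left)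

lemma cinner_sum_right: "cinner (y::'a::complex_inner) (sum f A) = (\<Sum>i\<in>A. cinner y (f i))"
  by (induction A rule: infinite_finite_induct) (simp_all add: cinner_add_right)

lemma cinner_scaleR_left: "cinner (r *\<^sub>R x::'a::complex_inner) y = of_real r * cinner x y"
  by (simp add: scaleR_scaleC cinner_scaleC_left)

lemma cinner_scaleR_right: "cinner (x::'a::complex_inner) (r *\<^sub>R y) = of_real r * cinner x y"
  by (simp add: scaleR_scaleC cinner_scaleC_right)

lemma Re_cinner_self: "Re (cinner (x::'a::complex_inner) x) = (norm x)\<^sup>2"
  by (simp add: cinner_self_norm)

lemma cinner_self_eq_zero [simp]: "cinner (x::'a::complex_inner) x = 0 \<longleftrightarrow> x = 0"
  by (simp add: cinner_self_norm)

lemma norm_add_square: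
  "(norm (x + y::'a::complex_inner))\<^sup>2 = (norm x)\<^sup>2 + (norm y)\<^sup>2 + 2 * Re (cinner x y)"
proof -
  have "Re (cinner y x) = Re (cinner x y)" by (subst cinner_commute) simp
  then show ?thesis
    by (simp add: Re_cinner_self[symmetric] cinner_add_left cinner_add_right del: Re_cinner_self)
qed

lemma norm_diff_square:
  "(norm (x - y::'a::complex_inner))\<^sup>2 = (norm x)\<^sup>2 + (norm y)\<^sup>2 - 2 * Re (cinner x y)"
  using norm_add_square[of x "- y"] cinner_diff_right[of x 0 y] by simp

lemma norm_cinner_le: "cmod (cinner (x::'a::complex_inner) y) \<le> norm x * norm y"
proof (cases "y = 0")
  case False
  define c where "c = cinner x y"
  define n where "n = (norm y)\<^sup>2"
  have n: "n > 0" using False by (simp add: n_def)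
  define t where "t = c / complex_of_real n"
  have e: "cinner (x - t *\<^sub>C y) (x - t *\<^sub>C y) =
      cinner x x - cnj t * cinner x y - t * cinner y x + t * cnj t * cinner y y"
    by (simp add: cinner_diff_left cinner_diff_right cinner_scaleC_left cinner_scaleC_right algebra_simps)
  have yx: "cinner y x = cnj c" by (simp add: c_def cinner_commute[of y x])
  have yy: "cinner y y = of_real n" by (simp add: n_def cinner_self_norm del: of_real_power)
  have "cinner (x - t *\<^sub>C y) (x - t *\<^sub>C y) = cinner x x - c * cnj c / of_real n"
    using n unfolding e unfolding yx yy c_def[symmetric] t_def by (simp add: field_simps del: of_real_power)
  then have "Re (cinner (x - t *\<^sub>C y) (x - t *\<^sub>C y)) = Re (cinner x x) - (cmod c)\<^sup>2 / n"
    by (simp add: complex_mult_cnj cmod_power2)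
  then have "(norm (x - t *\<^sub>C y))\<^sup>2 = (norm x)\<^sup>2 - (cmod c)\<^sup>2 / n"
    by (simp add: Re_cinner_self)
  then have "(cmod c)\<^sup>2 / n \<le> (norm x)\<^sup>2" by (smt (verit) zero_le_power2)
  then have "(cmod c)\<^sup>2 \<le> (norm x * norm y)\<^sup>2"
    using n by (simp add: n_def field_simps power_mult_distrib)
  then show ?thesis unfolding c_def by (metis power2_le_imp_le mult_nonneg_nonneg norm_ge_zero)
qed simp

lemma bounded_bilinear_cinner: "bounded_bilinear (cinner :: 'a::complex_inner \<Rightarrow> 'a \<Rightarrow> complex)"
proof
  fix a a' b b' :: 'a and r :: real
  show "cinner (a + a') b = cinner a b + cinner a' b" by (rule cinner_add_left)
  show "cinner a (b + b') = cinner a b + cinner a b'" by (rule cinner_add_right)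
  show "cinner (r *\<^sub>R a) b = r *\<^sub>R cinner a b" by (simp add: cinner_scaleR_left scaleR_conv_of_real)
  show "cinner a (r *\<^sub>R b) = r *\<^sub>R cinner a b" by (simp add: cinner_scaleR_right scaleR_conv_of_real)
  show "\<exists>K. \<forall>a b::'a. cmod (cinner a b) \<le> norm a * norm b * K"
    by (rule exI[of _ 1]) (simp add: norm_cinner_le)
qed

lemmas tendsto_cinner [tendsto_intros] = bounded_bilinear.tendsto[OF bounded_bilinear_cinner]
lemmas continuous_on_cinner [continuous_intros] =
  bounded_bilinear.continuous_on[OF bounded_bilinear_cinner]

lemma cinner_eqI: "(\<And>z. cinner z (x::'a::complex_inner) = cinner z y) \<Longrightarrow> x = y"
proof -
  assume "\<And>z. cinner z x = cinner z y"
  then have "cinner (x - y) (x - y) = 0" by (simp add: cinner_diff_right)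
  then show "x = y" by simp
qed

lemma cinner_eq_zero_on_dense:
  fixes w :: "'a::complex_inner"
  assumes "closure S = UNIV" and "\<And>x. x \<in> S \<Longrightarrow> cinner w x = 0"
  shows "w = 0"
proof -
  have "cinner w x = 0" for x
    by (rule continuous_constant_on_closure[of S "\<lambda>x. cinner w x"])
      (use assms in \<open>auto intro: continuous_on_cinner continuous_on_const continuous_on_id\<close>)
  then show ?thesis using cinner_self_eq_zero by blast
qed

lemma bounded_clinear_iff:
  "bounded_clinear f \<longleftrightarrow> bounded_linear f \<and> (\<forall>c x. f (c *\<^sub>C x) = c *\<^sub>C f x)"
proof
  assume f: "bounded_clinear f"
  then obtain K where "\<And>x. norm (f x) \<le> norm x * K" by (auto simp: bounded_clinear_def)
  with f show "bounded_linear f \<and> (\<forall>c x. f (c *\<^sub>C x) = c *\<^sub>C f x)"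
    by (auto simp: bounded_clinear_def clinear_def scaleR_scaleC intro!: bounded_linear_intro)
next
  assume "bounded_linear f \<and> (\<forall>c x. f (c *\<^sub>C x) = c *\<^sub>C f x)"
  then show "bounded_clinear f"
    by (auto simp: bounded_clinear_def clinear_def linear_simps dest: bounded_linear.bounded)
qed

lemma bounded_clinear_bounded_linear: "bounded_clinear f \<Longrightarrow> bounded_linear f"
  by (simp add: bounded_clinear_iff)

lemma bounded_clinear_scaleC: "bounded_clinear f \<Longrightarrow> f (c *\<^sub>C x) = c *\<^sub>C f x"
  by (simp add: bounded_clinear_iff)

lemmas bounded_clinear_simps = linear_simps[OF bounded_clinear_bounded_linear]

lemma bounded_clinear_sum: "bounded_clinear f \<Longrightarrow> f (sum g A) = (\<Sum>i\<in>A. f (g i))"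
  using bounded_clinear_bounded_linear bounded_linear.linear linear_sum by blast

lemmas bounded_clinear_tendsto = bounded_linear.tendsto[OF bounded_clinear_bounded_linear]

lemma bounded_clinear_id: "bounded_clinear (\<lambda>x. x)"
  by (simp add: bounded_clinear_iff bounded_linear_ident)

lemma bounded_clinear_zero: "bounded_clinear (\<lambda>x. 0)"
  by (simp add: bounded_clinear_iff bounded_linear_zero)

lemma bounded_clinear_compose:
  "bounded_clinear f \<Longrightarrow> bounded_clinear g \<Longrightarrow> bounded_clinear (f \<circ> g)"
  by (simp add: bounded_clinear_iff bounded_linear_compose o_def)

lemma bounded_clinear_funpow:
  "bounded_clinear (f :: 'a::complex_normed_vector \<Rightarrow> 'a) \<Longrightarrow> bounded_clinear (f ^^ n)"
  by (induction n) (simp_all add: bounded_clinear_compose id_def bounded_clinear_id)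

lemma bounded_clinear_add:
  "bounded_clinear f \<Longrightarrow> bounded_clinear g \<Longrightarrow> bounded_clinear (\<lambda>x. f x + g x)"
  by (simp add: bounded_clinear_iff bounded_linear_add scaleC_add_right)

lemma bounded_clinear_diff:
  "bounded_clinear f \<Longrightarrow> bounded_clinear g \<Longrightarrow> bounded_clinear (\<lambda>x. f x - g x)"
  by (simp add: bounded_clinear_iff bounded_linear_sub complex_vector.scale_right_diff_distrib)

lemma bounded_clinear_scaleC_left: "bounded_clinear f \<Longrightarrow> bounded_clinear (\<lambda>x. c *\<^sub>C f x)"
proof -
  have "bounded_linear (\<lambda>y::'b::complex_normed_vector. c *\<^sub>C y)"
    by (rule bounded_linear_intro[where K = "cmod c"])
      (simp_all add: scaleC_add_right scaleR_scaleC complex_vector.scale_left_commute norm_scaleC)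
  moreover assume "bounded_clinear f"
  ultimately show ?thesis
    by (auto simp: bounded_clinear_iff complex_vector.scale_left_commute
        intro: bounded_linear_compose[where g = f])
qed

lemma tendsto_scaleC:
  "(f \<longlongrightarrow> (a :: 'a::complex_normed_vector)) F \<Longrightarrow> ((\<lambda>x. c *\<^sub>C f x) \<longlongrightarrow> c *\<^sub>C a) F"
  by (rule bounded_clinear_tendsto[OF bounded_clinear_scaleC_left[OF bounded_clinear_id]])

definition adjoint_pair :: "('a::complex_inner \<Rightarrow> 'a) \<Rightarrow> ('a \<Rightarrow> 'a) \<Rightarrow> bool" where
  "adjoint_pair X Y \<longleftrightarrow> (\<forall>u v. cinner (X u) v = cinner u (Y v))"

lemma adjoint_pair_sym: "adjoint_pair X Y \<Longrightarrow> adjoint_pair Y X"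
  unfolding adjoint_pair_def by (metis cinner_commute)

definition star_closed :: "('a::complex_inner \<Rightarrow> 'a) set \<Rightarrow> bool" where
  "star_closed S \<longleftrightarrow> (\<forall>X\<in>S. \<exists>Y\<in>S. adjoint_pair X Y)"

lemma commutant_iff:
  "T \<in> commutant S \<longleftrightarrow> bounded_clinear T \<and> (\<forall>X\<in>S. \<forall>v. T (X v) = X (T v))"
  by (simp add: commutant_def fun_eq_iff)

lemma commutantI:
  "bounded_clinear T \<Longrightarrow> (\<And>X v. X \<in> S \<Longrightarrow> T (X v) = X (T v)) \<Longrightarrow> T \<in> commutant S"
  by (simp add: commutant_iff)

lemma commutant_bounded: "T \<in> commutant S \<Longrightarrow> bounded_clinear T"
  by (simp add: commutant_iff)

lemma commutant_commute: "T \<in> commutant S \<Longrightarrow> X \<in> S \<Longrightarrow> T (X v) = X (T v)"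
  by (simp add: commutant_iff)

lemma commutant_antimono: "S \<subseteq> S' \<Longrightarrow> commutant S' \<subseteq> commutant S"
  unfolding commutant_def by blast

lemma subset_bicommutant:
  assumes "\<And>X. X \<in> S \<Longrightarrow> bounded_clinear X"
  shows "S \<subseteq> commutant (commutant S)"
proof (rule subsetI, rule commutantI)
  fix X assume "X \<in> S"
  then show "bounded_clinear X" by (rule assms)
  fix T v assume "T \<in> commutant S"
  show "X (T v) = T (X v)" using commutant_commute[OF \<open>T \<in> commutant S\<close> \<open>X \<in> S\<close>] by simp
qed

lemma id_mem_commutant: "(\<lambda>x. x) \<in> commutant S"
  by (rule commutantI[OF bounded_clinear_id]) simp

lemma compose_mem_commutant:
  assumes "T \<in> commutant S" "V \<in> commutant S"
  shows "T \<circ> V \<in> commutant S"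
proof (rule commutantI)
  show "bounded_clinear (T \<circ> V)"
    using assms by (intro bounded_clinear_compose commutant_bounded)
  fix X v assume "X \<in> S"
  then show "(T \<circ> V) (X v) = X ((T \<circ> V) v)"
    using commutant_commute[OF assms(1)] commutant_commute[OF assms(2)] by simp
qed

context
  fixes S :: "('a::complex_normed_vector \<Rightarrow> 'a) set"
  assumes bounded: "\<And>X. X \<in> S \<Longrightarrow> bounded_clinear X"
begin

lemma zero_mem_commutant: "(\<lambda>x. 0) \<in> commutant S"
proof (rule commutantI[OF bounded_clinear_zero])
  show "0 = X 0" if "X \<in> S" for X using bounded_clinear_simps(3)[OF bounded[OF that]] by simp
qed

lemma add_mem_commutant:
  assumes "T \<in> commutant S" "V \<in> commutant S"
  shows "(\<lambda>x. T x + V x) \<in> commutant S"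
proof (rule commutantI)
  show "bounded_clinear (\<lambda>x. T x + V x)"
    using assms by (intro bounded_clinear_add commutant_bounded)
  fix X v assume "X \<in> S"
  then show "T (X v) + V (X v) = X (T v + V v)"
    using commutant_commute[OF assms(1)] commutant_commute[OF assms(2)]
    by (simp add: bounded_clinear_simps(1)[OF bounded])
qed

lemma diff_mem_commutant:
  assumes "T \<in> commutant S" "V \<in> commutant S"
  shows "(\<lambda>x. T x - V x) \<in> commutant S"
proof (rule commutantI)
  show "bounded_clinear (\<lambda>x. T x - V x)"
    using assms by (intro bounded_clinear_diff commutant_bounded)
  fix X v assume "X \<in> S"
  then show "T (X v) - V (X v) = X (T v - V v)"
    using commutant_commute[OF assms(1)] commutant_commute[OF assms(2)]
    by (simp add: bounded_clinear_simps(2)[OF bounded])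
qed

lemma scaleC_mem_commutant:
  assumes "T \<in> commutant S"
  shows "(\<lambda>x. c *\<^sub>C T x) \<in> commutant S"
proof (rule commutantI)
  show "bounded_clinear (\<lambda>x. c *\<^sub>C T x)"
    using assms by (intro bounded_clinear_scaleC_left commutant_bounded)
  fix X v assume "X \<in> S"
  then show "c *\<^sub>C T (X v) = X (c *\<^sub>C T v)"
    using commutant_commute[OF assms] by (simp add: bounded_clinear_scaleC[OF bounded])
qed

end

lemma commutant_conj:
  assumes "bounded_clinear V" "bounded_clinear V'" and V': "\<And>x. V (V' x) = x" "\<And>x. V' (V x) = x"
    and S: "\<And>X. X \<in> S \<Longrightarrow> V' \<circ> X \<circ> V \<in> S" and W: "W \<in> commutant S"
  shows "V \<circ> W \<circ> V' \<in> commutant S"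
proof (rule commutantI)
  show "bounded_clinear (V \<circ> W \<circ> V')"
    using assms(1,2) commutant_bounded[OF W] by (intro bounded_clinear_compose)
  fix X v assume "X \<in> S"
  have "W (V' (X v)) = V' (X (V (W (V' v))))"
    using commutant_commute[OF W S[OF \<open>X \<in> S\<close>], of "V' v"] V' by simp
  then show "(V \<circ> W \<circ> V') (X v) = X ((V \<circ> W \<circ> V') v)"
    using V' by simp
qed

section \<open>Cesaro means\<close>

definition cesaro :: "(nat \<Rightarrow> 'a::real_normed_vector) \<Rightarrow> nat \<Rightarrow> 'a" where
  "cesaro x N = (1 / real N) *\<^sub>R (\<Sum>n<N. x n)"

lemma cesaro_real: "cesaro (x :: nat \<Rightarrow> real) N = (\<Sum>n<N. x n) / real N"
  by (simp add: cesaro_def)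

lemma cesaro_add: "cesaro (\<lambda>n. x n + y n) N = cesaro x N + cesaro y N"
  by (simp add: cesaro_def sum.distrib scaleR_add_right)

lemma cesaro_diff: "cesaro (\<lambda>n. x n - y n) N = cesaro x N - cesaro y N"
  by (simp add: cesaro_def sum_subtractf scaleR_diff_right)

lemma cesaro_sum: "cesaro (\<lambda>n. \<Sum>i\<in>A. x i n) N = (\<Sum>i\<in>A. cesaro (x i) N)"
  by (simp add: cesaro_def scaleR_sum_right sum.swap[of _ A])

lemma cesaro_scaleC: "cesaro (\<lambda>n. c *\<^sub>C x n) N = c *\<^sub>C cesaro x N"
  by (simp add: cesaro_def complex_vector.scale_sum_right scaleR_scaleC complex_vector.scale_left_commute)

lemma cesaro_mult_left: "cesaro (\<lambda>n. c * (x n :: 'a::real_normed_algebra)) N = c * cesaro x N"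
  by (simp add: cesaro_def sum_distrib_left[symmetric] mult_scaleR_right)

lemma cesaro_bounded_clinear: "bounded_clinear T \<Longrightarrow> cesaro (\<lambda>n. T (x n)) N = T (cesaro x N)"
  by (simp add: cesaro_def bounded_clinear_sum bounded_clinear_simps)

lemma cesaro_cinner_left: "cesaro (\<lambda>n. cinner (x n) v) N = cinner (cesaro x N) v"
  by (simp add: cesaro_def cinner_scaleR_left cinner_sum_left scaleR_conv_of_real sum_distrib_left)

lemma cesaro_cnj: "cesaro (\<lambda>n. cnj (x n)) N = cnj (cesaro x N)"
  by (simp add: cesaro_def scaleR_conv_of_real)

lemma cesaro_Re: "cesaro (\<lambda>n. Re (x n)) N = Re (cesaro x N)"
  by (simp add: cesaro_def)

lemma cesaro_const: "(\<lambda>N. cesaro (\<lambda>n. c) N) \<longlonglongrightarrow> c"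
proof (rule tendsto_eventually)
  show "\<forall>\<^sub>F N in sequentially. cesaro (\<lambda>n. c) N = c"
    using eventually_ge_at_top[of "1::nat"] by eventually_elim (simp add: cesaro_def sum_constant_scaleR)
qed

lemma norm_cesaro_le: "norm (cesaro x N) \<le> cesaro (\<lambda>n. norm (x n)) N"
  by (simp add: cesaro_def divide_right_mono norm_sum)

lemma norm_cesaro_le_bound:
  assumes "\<And>n. norm (x n) \<le> C"
  shows "norm (cesaro x N) \<le> C"
proof (cases "N = 0")
  case True
  moreover have "0 \<le> C" using assms[of 0] norm_ge_zero order_trans by blast
  ultimately show ?thesis by (simp add: cesaro_def)
next
  case False
  have "norm (cesaro x N) \<le> (\<Sum>n<N. norm (x n)) / real N"
    using norm_cesaro_le[of x N] by (simp add: cesaro_real)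
  also have "\<dots> \<le> (\<Sum>n<N. C) / real N"
    by (intro divide_right_mono sum_mono assms) simp
  finally show ?thesis using False by simp
qed

lemma power2_cesaro_le: "(cesaro (a :: nat \<Rightarrow> real) N)\<^sup>2 \<le> cesaro (\<lambda>n. (a n)\<^sup>2) N"
proof (cases "N = 0")
  case False
  have "(cesaro a N)\<^sup>2 = (\<Sum>n<N. a n)\<^sup>2 / (real N)\<^sup>2" by (simp add: cesaro_real power_divide)
  also have "\<dots> \<le> ((\<Sum>n<N. (a n)\<^sup>2) * real N) / (real N)\<^sup>2"
    using sum_squared_le_sum_of_squares[of a "{..<N}"] by (simp add: divide_right_mono)
  also have "\<dots> = cesaro (\<lambda>n. (a n)\<^sup>2) N" using False by (simp add: cesaro_real power2_eq_square)
  finally show ?thesis .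
qed (simp add: cesaro_def)

lemma norm_sum_shift_diff_le:
  fixes x :: "nat \<Rightarrow> 'a::real_normed_vector"
  assumes "\<And>n. norm (x n) \<le> C"
  shows "norm ((\<Sum>n<N. x (n + h)) - (\<Sum>n<N. x n)) \<le> 2 * real h * C"
proof (induction h)
  case (Suc h)
  have "(\<Sum>n<N. x (n + Suc h)) - (\<Sum>n<N. x (n + h)) = (\<Sum>n<N. x (Suc n + h) - x (n + h))"
    by (simp add: sum_subtractf)
  also have "\<dots> = x (N + h) - x (0 + h)"
    by (rule sum_lessThan_telescope[where f = "\<lambda>n. x (n + h)"])
  finally have split: "(\<Sum>n<N. x (n + Suc h)) - (\<Sum>n<N. x n) =
      ((\<Sum>n<N. x (n + h)) - (\<Sum>n<N. x n)) + (x (N + h) - x h)"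
    by (simp add: algebra_simps)
  have "norm (x (N + h) - x h) \<le> 2 * C"
    using norm_triangle_ineq4[of "x (N + h)" "x h"] assms[of "N + h"] assms[of h] by linarith
  then show ?case
    unfolding split
    using Suc norm_triangle_ineq[of "(\<Sum>n<N. x (n + h)) - (\<Sum>n<N. x n)" "x (N + h) - x h"]
    by (simp add: algebra_simps)
qed simp

lemma cesaro_shift:
  fixes x :: "nat \<Rightarrow> 'a::real_normed_vector"
  assumes "\<And>n. norm (x n) \<le> C"
  shows "(\<lambda>N. cesaro (\<lambda>n. x (n + h)) N - cesaro x N) \<longlonglongrightarrow> 0"
proof (rule Lim_null_comparison)
  have "norm (cesaro (\<lambda>n. x (n + h)) N - cesaro x N) =
      norm ((\<Sum>n<N. x (n + h)) - (\<Sum>n<N. x n)) / real N" for N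
    by (simp add: cesaro_def scaleR_diff_right[symmetric] divide_inverse mult.commute)
  then show "\<forall>\<^sub>F N in sequentially. norm (cesaro (\<lambda>n. x (n + h)) N - cesaro x N) \<le> 2 * real h * C / real N"
    using norm_sum_shift_diff_le[of x C, OF assms] by (intro always_eventually allI) (simp add: divide_right_mono)
  show "(\<lambda>N. 2 * real h * C / real N) \<longlonglongrightarrow> 0"
    by (rule lim_const_over_n)
qed

lemma cesaro_subsequence:
  fixes f :: "nat \<Rightarrow> real"
  assumes nonneg: "\<And>n. 0 \<le> f n" and lim: "cesaro f \<longlonglongrightarrow> 0" and m: "m > 0"
  shows "cesaro (\<lambda>n. f (n * m)) \<longlonglongrightarrow> 0"
proof (rule Lim_null_comparison)
  have "(cesaro f \<circ> (\<lambda>N. N * m)) \<longlonglongrightarrow> 0"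
    by (rule LIMSEQ_subseq_LIMSEQ[OF lim]) (use m in \<open>simp add: strict_mono_def\<close>)
  then show "(\<lambda>N. real m * cesaro f (N * m)) \<longlonglongrightarrow> 0"
    using tendsto_mult_right_zero[of "cesaro f \<circ> (\<lambda>N. N * m)" sequentially "real m"] by (simp add: o_def)
  show "\<forall>\<^sub>F N in sequentially. norm (cesaro (\<lambda>n. f (n * m)) N) \<le> real m * cesaro f (N * m)"
  proof (intro always_eventually allI)
    fix N
    have "(\<Sum>n<N. f (n * m)) = (\<Sum>j\<in>(\<lambda>n. n * m) ` {..<N}. f j)"
      using m by (subst sum.reindex) (auto simp: inj_on_def)
    also have "\<dots> \<le> (\<Sum>j<N * m. f j)"
      by (rule sum_mono2) (auto simp: nonneg m)
    finally show "norm (cesaro (\<lambda>n. f (n * m)) N) \<le> real m * cesaro f (N * m)"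
      using m nonneg by (simp add: cesaro_real sum_nonneg divide_right_mono)
  qed
qed

lemma cesaro_scaleR: "cesaro (\<lambda>n. r *\<^sub>R x n) N = r *\<^sub>R cesaro x N"
  by (simp add: cesaro_def scaleR_sum_right)

lemma sum_sum_dist_le:
  fixes f :: "nat \<Rightarrow> real"
  assumes nonneg: "\<And>d. 0 \<le> f d"
  shows "(\<Sum>h<H. \<Sum>h'<H. f (if h' \<le> h then h - h' else h' - h)) \<le> 2 * real H * (\<Sum>d<H. f d)"
proof -
  have "(\<Sum>h'<H. f (if h' \<le> h then h - h' else h' - h)) \<le> 2 * (\<Sum>d<H. f d)" if "h < H" for h
  proof -
    have below: "(\<Sum>h'\<in>{..<H} \<inter> {h'. h' \<le> h}. f (h - h')) \<le> (\<Sum>d<H. f d)"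
    proof -
      have "(\<Sum>h'\<in>{..<H} \<inter> {h'. h' \<le> h}. f (h - h')) =
          (\<Sum>d\<in>(\<lambda>h'. h - h') ` ({..<H} \<inter> {h'. h' \<le> h}). f d)"
        by (subst sum.reindex) (auto simp: inj_on_def)
      also have "\<dots> \<le> (\<Sum>d<H. f d)"
        by (rule sum_mono2) (use that nonneg in auto)
      finally show ?thesis .
    qed
    have above: "(\<Sum>h'\<in>{..<H} \<inter> - {h'. h' \<le> h}. f (h' - h)) \<le> (\<Sum>d<H. f d)"
    proof -
      have "(\<Sum>h'\<in>{..<H} \<inter> - {h'. h' \<le> h}. f (h' - h)) =
          (\<Sum>d\<in>(\<lambda>h'. h' - h) ` ({..<H} \<inter> - {h'. h' \<le> h}). f d)"
        by (subst sum.reindex) (auto simp: inj_on_def)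
      also have "\<dots> \<le> (\<Sum>d<H. f d)"
        by (rule sum_mono2) (use nonneg in auto)
      finally show ?thesis .
    qed
    have "(\<Sum>h'<H. f (if h' \<le> h then h - h' else h' - h)) =
        (\<Sum>h'\<in>{..<H} \<inter> {h'. h' \<le> h}. f (h - h')) + (\<Sum>h'\<in>{..<H} \<inter> - {h'. h' \<le> h}. f (h' - h))"
      by (simp add: if_distrib sum.If_cases)
    with below above show ?thesis by simp
  qed
  then have "(\<Sum>h<H. \<Sum>h'<H. f (if h' \<le> h then h - h' else h' - h)) \<le> (\<Sum>h<H. 2 * (\<Sum>d<H. f d))"
    by (intro sum_mono) simp
  then show ?thesis by simp
qed

lemma power2_norm_sum:
  "(norm (sum z A :: 'a::complex_inner))\<^sup>2 = Re (\<Sum>h\<in>A. \<Sum>h'\<in>A. cinner (z h) (z h'))"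
  unfolding Re_cinner_self[symmetric] cinner_sum_left cinner_sum_right by (subst sum.swap) (rule refl)

lemma cesaro_minus_window_average:
  fixes x :: "nat \<Rightarrow> 'a::real_normed_vector"
  assumes bounded: "\<And>n. norm (x n) \<le> C" and "H > 0"
  shows "(\<lambda>N. cesaro x N - cesaro (\<lambda>n. (1 / real H) *\<^sub>R (\<Sum>h<H. x (n + h))) N) \<longlonglongrightarrow> 0"
proof -
  have "cesaro x N - cesaro (\<lambda>n. (1 / real H) *\<^sub>R (\<Sum>h<H. x (n + h))) N =
      - ((1 / real H) *\<^sub>R (\<Sum>h<H. cesaro (\<lambda>n. x (n + h)) N - cesaro x N))" for N
    using \<open>H > 0\<close> by (simp add: cesaro_scaleR cesaro_sum sum_subtractf scaleR_diff_right sum_constant_scaleR)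
  moreover have "(\<lambda>N. - ((1 / real H) *\<^sub>R (\<Sum>h<H. cesaro (\<lambda>n. x (n + h)) N - cesaro x N))) \<longlonglongrightarrow> - ((1 / real H) *\<^sub>R (\<Sum>h<H. 0))"
    by (intro tendsto_intros cesaro_shift[OF bounded])
  ultimately show ?thesis by simp
qed

lemma cesaro_shifted_correlation:
  fixes x :: "nat \<Rightarrow> 'a::complex_inner"
  assumes bounded: "\<And>n. norm (x n) \<le> C"
    and correlation: "\<And>d. cesaro (\<lambda>n. cinner (x (n + d)) (x n)) \<longlonglongrightarrow> L d"
  shows "cesaro (\<lambda>n. cinner (x (n + h)) (x (n + h'))) \<longlonglongrightarrow>
    (if h' \<le> h then L (h - h') else cnj (L (h' - h)))"
proof -
  have C: "norm (cinner (x (n + d)) (x n)) \<le> C * C" for n d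
    using norm_cinner_le[of "x (n + d)" "x n"] bounded[of "n + d"] bounded[of n]
    by (smt (verit) mult_mono norm_ge_zero)
  have ordered: "cesaro (\<lambda>n. cinner (x (n + h)) (x (n + h'))) \<longlonglongrightarrow> L (h - h')" if "h' \<le> h" for h h'
  proof -
    have "(\<lambda>N. (cesaro (\<lambda>n. cinner (x (n + h' + (h - h'))) (x (n + h'))) N -
        cesaro (\<lambda>n. cinner (x (n + (h - h'))) (x n)) N) + cesaro (\<lambda>n. cinner (x (n + (h - h'))) (x n)) N)
        \<longlonglongrightarrow> 0 + L (h - h')"
      by (intro tendsto_add correlation cesaro_shift[where x = "\<lambda>n. cinner (x (n + (h - h'))) (x n)", OF C])
    then show ?thesis using that by (simp add: add.assoc)
  qed
  show ?thesis
  proof (cases "h' \<le> h")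
    case False
    have "(\<lambda>N. cnj (cesaro (\<lambda>n. cinner (x (n + h')) (x (n + h))) N)) \<longlonglongrightarrow> cnj (L (h' - h))"
      using False by (intro tendsto_cnj ordered) simp
    then show ?thesis
      using False by (simp add: cesaro_cnj[symmetric] cinner_commute[of "x (n + h)" for n])
  qed (simp add: ordered)
qed

lemma cesaro_window_square:
  fixes x :: "nat \<Rightarrow> 'a::complex_inner" and L :: "nat \<Rightarrow> complex"
  assumes bounded: "\<And>n. norm (x n) \<le> C"
    and correlation: "\<And>d. cesaro (\<lambda>n. cinner (x (n + d)) (x n)) \<longlonglongrightarrow> L d"
  shows "cesaro (\<lambda>n. (norm ((1 / real H) *\<^sub>R (\<Sum>h<H. x (n + h))))\<^sup>2) \<longlonglongrightarrow>
    Re (of_real ((1 / real H)\<^sup>2) * (\<Sum>h<H. \<Sum>h'<H. if h' \<le> h then L (h - h') else cnj (L (h' - h))))"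
proof -
  have "(norm ((1 / real H) *\<^sub>R (\<Sum>h<H. x (n + h))))\<^sup>2 =
      Re (of_real ((1 / real H)\<^sup>2) * (\<Sum>h<H. \<Sum>h'<H. cinner (x (n + h)) (x (n + h'))))" for n
  proof -
    have "(norm ((1 / real H) *\<^sub>R (\<Sum>h<H. x (n + h))))\<^sup>2 = (1 / real H)\<^sup>2 * (norm (\<Sum>h<H. x (n + h)))\<^sup>2"
      by (simp add: power_divide)
    then show ?thesis by (simp add: power2_norm_sum)
  qed
  then have "cesaro (\<lambda>n. (norm ((1 / real H) *\<^sub>R (\<Sum>h<H. x (n + h))))\<^sup>2) = (\<lambda>N. Re (of_real ((1 / real H)\<^sup>2) *
      (\<Sum>h<H. \<Sum>h'<H. cesaro (\<lambda>n. cinner (x (n + h)) (x (n + h'))) N)))"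
    by (intro ext) (simp only: cesaro_Re cesaro_mult_left cesaro_sum)
  then show ?thesis
    by (simp only:) (intro tendsto_intros cesaro_shifted_correlation[OF bounded correlation])
qed

lemma Re_window_correlation_le:
  fixes L :: "nat \<Rightarrow> complex"
  assumes "H > 0"
  shows "Re (of_real ((1 / real H)\<^sup>2) * (\<Sum>h<H. \<Sum>h'<H. if h' \<le> h then L (h - h') else cnj (L (h' - h))))
    \<le> 2 * cesaro (\<lambda>d. cmod (L d)) H"
proof -
  define L2 where "L2 h h' = (if h' \<le> h then L (h - h') else cnj (L (h' - h)))" for h h'
  have "Re (of_real ((1 / real H)\<^sup>2) * (\<Sum>h<H. \<Sum>h'<H. L2 h h')) \<le>
      (1 / real H)\<^sup>2 * cmod (\<Sum>h<H. \<Sum>h'<H. L2 h h')"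
    using complex_Re_le_cmod by (metis norm_mult norm_of_real abs_power2 abs_norm_cancel)
  also have "\<dots> \<le> (1 / real H)\<^sup>2 * (\<Sum>h<H. \<Sum>h'<H. cmod (L2 h h'))"
    by (intro mult_left_mono order_trans[OF norm_sum sum_mono[OF norm_sum]]) simp_all
  also have "(\<Sum>h<H. \<Sum>h'<H. cmod (L2 h h')) =
      (\<Sum>h<H. \<Sum>h'<H. cmod (L (if h' \<le> h then h - h' else h' - h)))"
    by (intro sum.cong refl) (simp add: L2_def)
  also have "(1 / real H)\<^sup>2 * \<dots> \<le> (1 / real H)\<^sup>2 * (2 * real H * (\<Sum>d<H. cmod (L d)))"
    by (intro mult_left_mono sum_sum_dist_le) simp_all
  also have "\<dots> = 2 * cesaro (\<lambda>d. cmod (L d)) H"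
    using \<open>H > 0\<close> by (simp add: cesaro_real power2_eq_square field_simps)
  finally show ?thesis by (simp add: L2_def)
qed

text \<open>Van der Corput: the Cesaro mean of \<open>x\<close> is asymptotically that of the window averages
  \<open>y n = (1/H) \<Sum>h<H. x (n + h)\<close>, whose squared norm averages to at most \<open>2/H \<Sum>d<H. \<bar>L d\<bar>\<close>.\<close>
lemma van_der_corput:
  fixes x :: "nat \<Rightarrow> 'a::complex_inner" and L :: "nat \<Rightarrow> complex"
  assumes bounded: "\<And>n. norm (x n) \<le> C"
    and correlation: "\<And>d. cesaro (\<lambda>n. cinner (x (n + d)) (x n)) \<longlonglongrightarrow> L d"
    and decay: "cesaro (\<lambda>d. cmod (L d)) \<longlonglongrightarrow> 0"
  shows "cesaro x \<longlonglongrightarrow> 0"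
proof (rule tendstoI)
  fix e :: real assume "e > 0"
  then have "\<forall>\<^sub>F H in sequentially. 0 < H \<and> cesaro (\<lambda>d. cmod (L d)) H < e\<^sup>2 / 8"
    using eventually_conj[OF eventually_gt_at_top[of 0] order_tendstoD(2)[OF decay, of "e\<^sup>2 / 8"]]
    by simp
  then obtain H where "H > 0" and H: "cesaro (\<lambda>d. cmod (L d)) H < e\<^sup>2 / 8"
    by (auto simp: eventually_sequentially)
  define y where "y n = (1 / real H) *\<^sub>R (\<Sum>h<H. x (n + h))" for n
  define G where "G = Re (of_real ((1 / real H)\<^sup>2) *
    (\<Sum>h<H. \<Sum>h'<H. if h' \<le> h then L (h - h') else cnj (L (h' - h))))"
  have "(\<lambda>N. sqrt (cesaro (\<lambda>n. (norm (y n))\<^sup>2) N)) \<longlonglongrightarrow> sqrt G"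
    unfolding y_def G_def by (intro tendsto_real_sqrt cesaro_window_square[OF bounded correlation])
  moreover have "G \<le> 2 * cesaro (\<lambda>d. cmod (L d)) H"
    unfolding G_def by (rule Re_window_correlation_le[OF \<open>H > 0\<close>])
  then have "G < (e / 2)\<^sup>2"
    using H by (simp add: power_divide)
  then have "sqrt G < e / 2"
    using real_sqrt_less_mono[of G "(e / 2)\<^sup>2"] \<open>e > 0\<close> by simp
  ultimately have "\<forall>\<^sub>F N in sequentially. sqrt (cesaro (\<lambda>n. (norm (y n))\<^sup>2) N) < e / 2"
    by (rule order_tendstoD(2))
  moreover have "\<forall>\<^sub>F N in sequentially. norm (cesaro x N - cesaro y N) < e / 2"
    using tendstoD[OF cesaro_minus_window_average[of x C, OF bounded \<open>H > 0\<close>], of "e / 2"] \<open>e > 0\<close>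
    by (simp add: y_def[abs_def] dist_norm)
  ultimately show "\<forall>\<^sub>F N in sequentially. dist (cesaro x N) 0 < e"
  proof eventually_elim
    case (elim N)
    have "norm (cesaro y N) \<le> cesaro (\<lambda>n. norm (y n)) N" by (rule norm_cesaro_le)
    also have "\<dots> \<le> sqrt (cesaro (\<lambda>n. (norm (y n))\<^sup>2) N)"
      by (rule real_le_rsqrt[OF power2_cesaro_le])
    finally show ?case
      using elim norm_triangle_ineq[of "cesaro x N - cesaro y N" "cesaro y N"] by simp
  qed
qed

lemma cesaro_null_comparison:
  assumes "\<And>n. 0 \<le> x n" and "\<And>n. x n \<le> y n" and "cesaro y \<longlonglongrightarrow> 0"
  shows "cesaro (x :: nat \<Rightarrow> real) \<longlonglongrightarrow> 0"
proof (rule Lim_null_comparison[OF always_eventually[OF allI] assms(3)])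
  show "norm (cesaro x N) \<le> cesaro y N" for N
    using assms(1,2) by (simp add: cesaro_real sum_nonneg divide_right_mono sum_mono)
qed

lemma abs_cesaro_norm_diff_le:
  assumes "\<And>n. norm (a n - b n) \<le> C"
  shows "\<bar>cesaro (\<lambda>n. norm (a n)) N - cesaro (\<lambda>n. norm (b n)) N\<bar> \<le> C"
  using norm_cesaro_le_bound[of "\<lambda>n. norm (a n) - norm (b n)" C N] assms norm_triangle_ineq3 order_trans
  by (simp add: cesaro_diff) blast

lemma tendsto_zero_on_dense:
  fixes F :: "nat \<Rightarrow> 'a::metric_space \<Rightarrow> real"
  assumes dense: "closure S = UNIV"
    and lipschitz: "\<And>N x y. \<bar>F N x - F N y\<bar> \<le> C * dist x y"
    and lim: "\<And>x. x \<in> S \<Longrightarrow> (\<lambda>N. F N x) \<longlonglongrightarrow> 0"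
  shows "(\<lambda>N. F N x) \<longlonglongrightarrow> 0"
proof (rule tendstoI)
  fix e :: real assume "e > 0"
  define K where "K = \<bar>C\<bar> + 1"
  have "K > 0" by (simp add: K_def add_nonneg_pos)
  have "x \<in> closure S" using dense by simp
  then obtain y where "y \<in> S" and y: "dist y x < e / (2 * K)"
    using closure_approachable \<open>e > 0\<close> \<open>K > 0\<close> by (metis divide_pos_pos mult_pos_pos zero_less_numeral)
  have "K * dist x y < e / 2"
    using y \<open>K > 0\<close> by (simp add: dist_commute field_simps)
  moreover have "\<bar>F N x - F N y\<bar> \<le> K * dist x y" for N
    using lipschitz[of N x y] abs_ge_self[of C] zero_le_dist[of x y]
    by (smt (verit, best) K_def mult_right_mono)
  ultimately have close: "\<bar>F N x - F N y\<bar> < e / 2" for N by (meson le_less_trans)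
  have "\<forall>\<^sub>F N in sequentially. \<bar>F N y\<bar> < e / 2"
    using tendstoD[OF lim[OF \<open>y \<in> S\<close>], of "e / 2"] \<open>e > 0\<close> by simp
  then show "\<forall>\<^sub>F N in sequentially. dist (F N x) 0 < e"
  proof (rule eventually_mono)
    fix N assume "\<bar>F N y\<bar> < e / 2"
    with close[of N] abs_triangle_ineq[of "F N x - F N y" "F N y"]
    show "dist (F N x) 0 < e" by (simp add: dist_real_def)
  qed
qed

lemma funpow_add_apply: "(f ^^ (m + n)) x = (f ^^ m) ((f ^^ n) x)"
  by (simp add: funpow_add)

section \<open>Unitary operators\<close>

locale unitary_operator =
  fixes U :: "'h::complex_inner \<Rightarrow> 'h"
  assumes bounded: "bounded_clinear U"
    and surjective: "surj U"
    and cinner_preserving [simp]: "\<And>x y. cinner (U x) (U y) = cinner x y"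
begin

lemma norm_preserving [simp]: "norm (U x) = norm x"
  using cinner_preserving[of x x] by (metis Re_cinner_self norm_ge_zero power2_eq_iff_nonneg)

lemma injective: "inj U"
proof (rule injI)
  fix x y assume "U x = U y"
  then have "norm (U (x - y)) = 0" by (simp add: bounded_clinear_simps[OF bounded])
  then show "x = y" by simp
qed

lemma apply_inv [simp]: "U (inv U x) = x"
  by (simp add: surj_f_inv_f surjective)

lemma inv_apply [simp]: "inv U (U x) = x"
  by (simp add: inv_f_f injective)

lemma unitary_inv: "unitary_operator (inv U)"
proof
  have "inv U (x + y) = inv U x + inv U y" "inv U (c *\<^sub>C x) = c *\<^sub>C inv U x" for x y c
    by (metis apply_inv injective injD bounded_clinear_simps(1)[OF bounded],
        metis apply_inv injective injD bounded_clinear_scaleC[OF bounded])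
  moreover have "norm (inv U x) \<le> norm x * 1" for x
    by (metis apply_inv mult.right_neutral norm_preserving order_refl)
  ultimately show "bounded_clinear (inv U)"
    unfolding bounded_clinear_def clinear_def by blast
  show "surj (inv U)" by (metis apply_inv inv_apply surjI)
  show "cinner (inv U x) (inv U y) = cinner x y" for x y
    by (metis apply_inv cinner_preserving)
qed

lemma pow_apply_inv_pow [simp]: "(U ^^ n) ((inv U ^^ n) x) = x"
  by (induction n arbitrary: x) (simp_all add: funpow_swap1[of "inv U"])

lemma inv_pow_apply_pow [simp]: "(inv U ^^ n) ((U ^^ n) x) = x"
  by (induction n arbitrary: x) (simp_all add: funpow_swap1[of U])

lemma cinner_pow [simp]: "cinner ((U ^^ n) x) ((U ^^ n) y) = cinner x y"
  by (induction n arbitrary: x y) simp_all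

lemma norm_pow [simp]: "norm ((U ^^ n) x) = norm x"
  by (induction n arbitrary: x) simp_all

lemma cinner_pow_left: "cinner ((U ^^ n) x) y = cinner x ((inv U ^^ n) y)"
  by (metis cinner_pow pow_apply_inv_pow)

lemma bounded_pow: "bounded_clinear (U ^^ n)"
  by (rule bounded_clinear_funpow[OF bounded])

lemmas norm_inv_pow = unitary_operator.norm_pow[OF unitary_inv]
lemmas bounded_inv = unitary_operator.bounded[OF unitary_inv]
lemmas bounded_inv_pow = unitary_operator.bounded_pow[OF unitary_inv]

definition Ad :: "nat \<Rightarrow> ('h \<Rightarrow> 'h) \<Rightarrow> 'h \<Rightarrow> 'h" where
  "Ad j W = (U ^^ j) \<circ> W \<circ> (inv U ^^ j)"

lemma Ad_apply_pow [simp]: "Ad j W ((U ^^ j) x) = (U ^^ j) (W x)"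
  by (simp add: Ad_def)

lemma Ad_Suc: "Ad (Suc j) W = U \<circ> Ad j W \<circ> inv U"
  unfolding Ad_def funpow_Suc_right[where f = "inv U"] by (simp add: comp_assoc)

lemma bounded_Ad: "bounded_clinear W \<Longrightarrow> bounded_clinear (Ad j W)"
  unfolding Ad_def by (intro bounded_clinear_compose bounded_pow bounded_inv_pow)

lemma norm_Ad_le:
  assumes "\<And>x. norm (W x) \<le> norm x * K"
  shows "norm (Ad j W x) \<le> norm x * K"
  using assms[of "(inv U ^^ j) x"] by (simp add: Ad_def norm_inv_pow)

lemma Ad_adjoint_pair: "adjoint_pair W W' \<Longrightarrow> adjoint_pair (Ad j W) (Ad j W')"
  unfolding adjoint_pair_def by (simp add: Ad_def cinner_pow_left) (metis cinner_pow pow_apply_inv_pow)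

lemma Ad_commutant:
  assumes "B \<in> commutant D" and "\<And>W. W \<in> D \<Longrightarrow> (inv U ^^ j) \<circ> W \<circ> (U ^^ j) \<in> D"
  shows "Ad j B \<in> commutant D"
  unfolding commutant_def
proof (intro CollectI conjI ballI)
  show "bounded_clinear (Ad j B)"
    using assms(1) by (simp add: commutant_def bounded_Ad)
  fix W assume "W \<in> D"
  then have "B \<circ> ((inv U ^^ j) \<circ> W \<circ> (U ^^ j)) = (inv U ^^ j) \<circ> W \<circ> (U ^^ j) \<circ> B"
    using assms unfolding commutant_def by blast
  then have "B ((inv U ^^ j) (W x)) = (inv U ^^ j) (W ((U ^^ j) (B ((inv U ^^ j) x))))" for x
    by (metis comp_apply pow_apply_inv_pow)
  then show "Ad j B \<circ> W = W \<circ> Ad j B"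
    by (simp add: Ad_def fun_eq_iff)
qed

text \<open>The correlation defect \<open>\<langle>U\<^sup>n u, v\<rangle> - \<langle>u, \<Omega>\<rangle> \<langle>\<Omega>, v\<rangle>\<close> is sesquilinear and bounded
  uniformly in \<open>n\<close>, so its Cesaro means are equi-Lipschitz in each argument.\<close>
lemma mixing_on_dense:
  assumes dense: "closure S = UNIV"
    and base: "\<And>u v. u \<in> S \<Longrightarrow> v \<in> S \<Longrightarrow>
      cesaro (\<lambda>n. cmod (cinner ((U ^^ n) u) v - cinner u \<Omega> * cinner \<Omega> v)) \<longlonglongrightarrow> 0"
  shows "cesaro (\<lambda>n. cmod (cinner ((U ^^ n) u) v - cinner u \<Omega> * cinner \<Omega> v)) \<longlonglongrightarrow> 0"
proof -
  define d where "d u v n = cinner ((U ^^ n) u) v - cinner u \<Omega> * cinner \<Omega> v" for u v n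
  define B where "B = 1 + (norm \<Omega>)\<^sup>2"
  have bound: "cmod (d u v n) \<le> B * norm u * norm v" for u v n
  proof -
    have "cmod (d u v n) \<le> cmod (cinner ((U ^^ n) u) v) + cmod (cinner u \<Omega>) * cmod (cinner \<Omega> v)"
      unfolding d_def by (metis norm_mult norm_triangle_ineq4)
    also have "\<dots> \<le> norm u * norm v + (norm u * norm \<Omega>) * (norm \<Omega> * norm v)"
      using norm_cinner_le[of "(U ^^ n) u" v]
      by (intro add_mono mult_mono norm_cinner_le) simp_all
    finally show ?thesis by (simp add: B_def algebra_simps power2_eq_square)
  qed
  have left: "d u v n - d u' v n = d (u - u') v n" and right: "d u v n - d u v' n = d u (v - v') n"
    for u u' v v' n
    by (simp_all add: d_def bounded_clinear_simps(2)[OF bounded_pow] cinner_diff_left cinner_diff_right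
        algebra_simps)
  have dense_left: "(\<lambda>N. cesaro (\<lambda>n. cmod (d u v n)) N) \<longlonglongrightarrow> 0" if "v \<in> S" for u v
  proof (rule tendsto_zero_on_dense[OF dense, where F = "\<lambda>N x. cesaro (\<lambda>n. cmod (d x v n)) N"])
    show "\<bar>cesaro (\<lambda>n. cmod (d x v n)) N - cesaro (\<lambda>n. cmod (d y v n)) N\<bar> \<le> B * norm v * dist x y"
      for N x y
      by (rule abs_cesaro_norm_diff_le) (use bound[of "x - y" v] in \<open>simp add: left dist_norm mult_ac\<close>)
  qed (use base that in \<open>simp add: d_def\<close>)
  have "(\<lambda>N. cesaro (\<lambda>n. cmod (d u v n)) N) \<longlonglongrightarrow> 0"
  proof (rule tendsto_zero_on_dense[OF dense, where F = "\<lambda>N x. cesaro (\<lambda>n. cmod (d u x n)) N"])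
    show "\<bar>cesaro (\<lambda>n. cmod (d u x n)) N - cesaro (\<lambda>n. cmod (d u y n)) N\<bar> \<le> B * norm u * dist x y"
      for N x y
      by (rule abs_cesaro_norm_diff_le) (use bound[of u "x - y"] in \<open>simp add: right dist_norm\<close>)
  qed (use dense_left in simp)
  then show ?thesis by (simp add: d_def)
qed

end

locale weakly_mixing_unitary = unitary_operator U for U :: "'h::complex_inner \<Rightarrow> 'h" +
  fixes \<Omega> :: 'h
  assumes fixed: "U \<Omega> = \<Omega>"
    and unit: "norm \<Omega> = 1"
    and mixing: "\<And>u v. cesaro (\<lambda>n. cmod (cinner ((U ^^ n) u) v - cinner u \<Omega> * cinner \<Omega> v)) \<longlonglongrightarrow> 0"
begin

lemma cinner_\<Omega>_\<Omega> [simp]: "cinner \<Omega> \<Omega> = 1"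
  by (simp add: cinner_self_norm unit)

lemma pow_fixed [simp]: "(U ^^ n) \<Omega> = \<Omega>"
  by (induction n) (simp_all add: fixed)

lemma inv_pow_fixed [simp]: "(inv U ^^ n) \<Omega> = \<Omega>"
  by (metis inv_pow_apply_pow pow_fixed)

lemma Ad_fixed: "Ad j W \<Omega> = (U ^^ j) (W \<Omega>)"
  by (simp add: Ad_def)

lemma cesaro_cinner_pow_mult:
  assumes "m > 0" and "cinner u \<Omega> = 0"
  shows "cesaro (\<lambda>d. cmod (cinner ((U ^^ (d * m)) u) v)) \<longlonglongrightarrow> 0"
  using cesaro_subsequence[of "\<lambda>n. cmod (cinner ((U ^^ n) u) v)", OF _ _ \<open>m > 0\<close>] mixing[of u v] assms
  by simp

text \<open>The component of \<open>\<eta>\<close> orthogonal to \<open>\<Omega>\<close> averages out by van der Corput.\<close>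
lemma cesaro_pow_mult:
  assumes "m > 0"
  shows "cesaro (\<lambda>n. (U ^^ (n * m)) \<eta>) \<longlonglongrightarrow> cinner \<eta> \<Omega> *\<^sub>C \<Omega>"
proof -
  define \<eta>0 where "\<eta>0 = \<eta> - cinner \<eta> \<Omega> *\<^sub>C \<Omega>"
  have "cinner \<eta>0 \<Omega> = 0"
    by (simp add: \<eta>0_def cinner_diff_left cinner_scaleC_left)
  have "cesaro (\<lambda>n. (U ^^ (n * m)) \<eta>0) \<longlonglongrightarrow> 0"
  proof (rule van_der_corput[where C = "norm \<eta>0" and L = "\<lambda>d. cinner ((U ^^ (d * m)) \<eta>0) \<eta>0"])
    have "cinner ((U ^^ ((n + d) * m)) \<eta>0) ((U ^^ (n * m)) \<eta>0) = cinner ((U ^^ (d * m)) \<eta>0) \<eta>0" for n d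
      by (simp add: add_mult_distrib funpow_add)
    then show "cesaro (\<lambda>n. cinner ((U ^^ ((n + d) * m)) \<eta>0) ((U ^^ (n * m)) \<eta>0))
        \<longlonglongrightarrow> cinner ((U ^^ (d * m)) \<eta>0) \<eta>0" for d
      using cesaro_const by simp
  qed (simp_all add: cesaro_cinner_pow_mult[OF \<open>m > 0\<close> \<open>cinner \<eta>0 \<Omega> = 0\<close>])
  then have "(\<lambda>N. cesaro (\<lambda>n. cinner \<eta> \<Omega> *\<^sub>C \<Omega>) N + cesaro (\<lambda>n. (U ^^ (n * m)) \<eta>0) N)
      \<longlonglongrightarrow> cinner \<eta> \<Omega> *\<^sub>C \<Omega> + 0"
    by (intro tendsto_add cesaro_const)
  moreover have "(U ^^ (n * m)) \<eta> = cinner \<eta> \<Omega> *\<^sub>C \<Omega> + (U ^^ (n * m)) \<eta>0" for n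
    by (simp add: \<eta>0_def bounded_clinear_simps[OF bounded_pow] bounded_clinear_scaleC[OF bounded_pow])
  ultimately show ?thesis by (simp add: cesaro_add[symmetric])
qed

end

text \<open>\<open>D\<close> stands for \<open>M'\<close> when \<open>A \<in> M\<close> and for \<open>\<pi>(\<AA>)\<close> when \<open>A \<in> M'\<close>.\<close>
locale twisted_average = weakly_mixing_unitary U \<Omega> for U :: "'h::complex_inner \<Rightarrow> 'h" and \<Omega> +
  fixes D :: "('h \<Rightarrow> 'h) set" and A :: "'h \<Rightarrow> 'h" and m1 m2 :: nat
  assumes D_bounded: "\<And>W. W \<in> D \<Longrightarrow> bounded_clinear W"
    and D_star_closed: "star_closed D"
    and D_conj: "\<And>W. W \<in> D \<Longrightarrow> U \<circ> W \<circ> inv U \<in> D"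
    and D_conj_inv: "\<And>W. W \<in> D \<Longrightarrow> inv U \<circ> W \<circ> U \<in> D"
    and A_commutant: "A \<in> commutant D"
    and D_cyclic: "closure ((\<lambda>W. W \<Omega>) ` D) = UNIV"
    and m1_pos: "0 < m1" and m2_pos: "0 < m2"
begin

lemma Ad_mem: "W \<in> D \<Longrightarrow> Ad j W \<in> D"
  by (induction j) (simp_all add: Ad_Suc D_conj, simp add: Ad_def)

lemma conj_inv_pow_mem: "W \<in> D \<Longrightarrow> (inv U ^^ j) \<circ> W \<circ> (U ^^ j) \<in> D"
proof (induction j)
  case (Suc j)
  have "(inv U ^^ Suc j) \<circ> W \<circ> (U ^^ Suc j) = inv U \<circ> ((inv U ^^ j) \<circ> W \<circ> (U ^^ j)) \<circ> U"
    by (simp add: fun_eq_iff funpow_swap1[of U])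
  then show ?case using D_conj_inv[OF Suc.IH[OF Suc.prems]] by (simp only:)
qed simp

definition A0 :: "'h \<Rightarrow> 'h" where
  "A0 v = A v - cinner (A \<Omega>) \<Omega> *\<^sub>C v"

lemma A0_orthogonal: "cinner (A0 \<Omega>) \<Omega> = 0"
  by (simp add: A0_def cinner_diff_left cinner_scaleC_left)

lemma A0_commutant: "A0 \<in> commutant D"
  unfolding commutant_def
proof (intro CollectI conjI ballI)
  have "bounded_clinear A" using A_commutant by (simp add: commutant_def)
  then show "bounded_clinear A0"
    unfolding A0_def[abs_def] by (intro bounded_clinear_diff bounded_clinear_scaleC_left bounded_clinear_id)
  fix W assume "W \<in> D"
  then show "A0 \<circ> W = W \<circ> A0"
    using commutant_commute[OF A_commutant] D_bounded
    by (simp add: A0_def fun_eq_iff bounded_clinear_simps bounded_clinear_scaleC)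
qed

lemma Ad_A0_commutant: "Ad j A0 \<in> commutant D"
  by (rule Ad_commutant[OF A0_commutant conj_inv_pow_mem])

definition remainder :: "('h \<Rightarrow> 'h) \<Rightarrow> nat \<Rightarrow> 'h" where
  "remainder X n = (U ^^ (n * m1)) (Ad (n * m2) X (A0 \<Omega>))"

lemma twisted_split:
  assumes "X \<in> D"
  shows "(U ^^ (n * m1)) (A ((U ^^ (n * m2)) (X \<Omega>))) =
    cinner (A \<Omega>) \<Omega> *\<^sub>C (U ^^ (n * (m1 + m2))) (X \<Omega>) + remainder X n"
proof -
  have X: "bounded_clinear (Ad (n * m2) X)" by (rule D_bounded[OF Ad_mem[OF assms]])
  have "A ((U ^^ (n * m2)) (X \<Omega>)) = Ad (n * m2) X (A \<Omega>)"
    using commutant_commute[OF A_commutant Ad_mem[OF assms], where v = \<Omega>] by (simp add: Ad_fixed)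
  also have "\<dots> = cinner (A \<Omega>) \<Omega> *\<^sub>C (U ^^ (n * m2)) (X \<Omega>) + Ad (n * m2) X (A0 \<Omega>)"
    by (simp add: A0_def bounded_clinear_simps[OF X] bounded_clinear_scaleC[OF X] Ad_fixed)
  finally show ?thesis
    by (simp add: remainder_def bounded_clinear_simps[OF bounded_pow] bounded_clinear_scaleC[OF bounded_pow]
        add_mult_distrib2 funpow_add)
qed

lemma remainder_correlation:
  assumes "X \<in> D" "X' \<in> D" and adjoint: "adjoint_pair X X'"
  shows "cinner (remainder X (n + d)) (remainder X n) =
    cinner (Ad (d * m1) A0 ((U ^^ (n * m2)) (X' ((U ^^ (d * (m1 + m2))) (X \<Omega>))))) (A0 \<Omega>)"
proof -
  have "cinner (remainder X (n + d)) (remainder X n) =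
      cinner ((U ^^ (d * m1)) (Ad ((n + d) * m2) X (A0 \<Omega>))) (Ad (n * m2) X (A0 \<Omega>))"
    by (simp add: remainder_def add_mult_distrib funpow_add)
  also have "\<dots> = cinner (Ad (n * m2) X' ((U ^^ (d * m1)) (Ad ((n + d) * m2) X (A0 \<Omega>)))) (A0 \<Omega>)"
    using Ad_adjoint_pair[OF adjoint_pair_sym[OF adjoint]] by (simp add: adjoint_pair_def)
  also have "Ad ((n + d) * m2) X (A0 \<Omega>) = A0 ((U ^^ ((n + d) * m2)) (X \<Omega>))"
    using commutant_commute[OF A0_commutant Ad_mem[OF \<open>X \<in> D\<close>], where v = \<Omega>] by (simp add: Ad_fixed)
  also have "(U ^^ (d * m1)) (A0 ((U ^^ ((n + d) * m2)) (X \<Omega>))) =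
      Ad (d * m1) A0 ((U ^^ (d * m1)) ((U ^^ ((n + d) * m2)) (X \<Omega>)))"
    by simp
  also have "(U ^^ (d * m1)) ((U ^^ ((n + d) * m2)) (X \<Omega>)) =
      (U ^^ (n * m2)) ((U ^^ (d * (m1 + m2))) (X \<Omega>))"
    by (simp only: funpow_add_apply[symmetric]) (simp add: algebra_simps)
  also have "Ad (n * m2) X' (Ad (d * m1) A0 ((U ^^ (n * m2)) ((U ^^ (d * (m1 + m2))) (X \<Omega>)))) =
      Ad (d * m1) A0 (Ad (n * m2) X' ((U ^^ (n * m2)) ((U ^^ (d * (m1 + m2))) (X \<Omega>))))"
    by (rule commutant_commute[OF Ad_A0_commutant Ad_mem[OF \<open>X' \<in> D\<close>], symmetric])
  finally show ?thesis by simp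
qed

lemma remainder_correlation_tendsto:
  assumes "X \<in> D" "X' \<in> D" and adjoint: "adjoint_pair X X'"
  shows "cesaro (\<lambda>n. cinner (remainder X (n + d)) (remainder X n)) \<longlonglongrightarrow>
    cinner ((U ^^ (d * (m1 + m2))) (X \<Omega>)) (X \<Omega>) * cinner ((U ^^ (d * m1)) (A0 \<Omega>)) (A0 \<Omega>)"
proof -
  define w where "w = X' ((U ^^ (d * (m1 + m2))) (X \<Omega>))"
  have A0d: "bounded_clinear (Ad (d * m1) A0)"
    using Ad_A0_commutant by (rule commutant_bounded)
  have "cesaro (\<lambda>n. cinner (remainder X (n + d)) (remainder X n)) =
      (\<lambda>N. cinner (Ad (d * m1) A0 (cesaro (\<lambda>n. (U ^^ (n * m2)) w) N)) (A0 \<Omega>))"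
    by (rule ext) (simp only: remainder_correlation[OF assms] w_def
        cesaro_cinner_left cesaro_bounded_clinear[OF A0d])
  moreover have "(\<lambda>N. cinner (Ad (d * m1) A0 (cesaro (\<lambda>n. (U ^^ (n * m2)) w) N)) (A0 \<Omega>))
      \<longlonglongrightarrow> cinner (Ad (d * m1) A0 (cinner w \<Omega> *\<^sub>C \<Omega>)) (A0 \<Omega>)"
    by (intro tendsto_cinner tendsto_const bounded_clinear_tendsto[OF A0d] cesaro_pow_mult[OF m2_pos])
  moreover have "cinner w \<Omega> = cinner ((U ^^ (d * (m1 + m2))) (X \<Omega>)) (X \<Omega>)"
    using adjoint_pair_sym[OF adjoint] by (simp add: w_def adjoint_pair_def)
  ultimately show ?thesis
    by (simp add: bounded_clinear_scaleC[OF A0d] cinner_scaleC_left Ad_fixed)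
qed

text \<open>The correlations of the remainder are dominated by those of the weakly mixing \<open>U\<^sup>m\<^sup>1\<close> at the
  vector \<open>A0 \<Omega> \<bottom> \<Omega>\<close>, so van der Corput applies.\<close>
lemma cesaro_remainder:
  assumes "X \<in> D"
  shows "cesaro (remainder X) \<longlonglongrightarrow> 0"
proof -
  obtain X' where "X' \<in> D" and adjoint: "adjoint_pair X X'"
    using D_star_closed assms by (auto simp: star_closed_def)
  obtain K where K: "\<And>x. norm (X x) \<le> norm x * K"
    using D_bounded[OF assms] by (auto simp: bounded_clinear_def)
  define L where "L d = cinner ((U ^^ (d * (m1 + m2))) (X \<Omega>)) (X \<Omega>) *
    cinner ((U ^^ (d * m1)) (A0 \<Omega>)) (A0 \<Omega>)" for d
  show ?thesis
  proof (rule van_der_corput[where C = "norm (A0 \<Omega>) * K" and L = L])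
    show "norm (remainder X n) \<le> norm (A0 \<Omega>) * K" for n
      by (simp add: remainder_def norm_Ad_le[OF K])
    show "cesaro (\<lambda>n. cinner (remainder X (n + d)) (remainder X n)) \<longlonglongrightarrow> L d" for d
      unfolding L_def by (rule remainder_correlation_tendsto[OF assms \<open>X' \<in> D\<close> adjoint])
    have "cmod (L d) \<le> (norm (X \<Omega>))\<^sup>2 * cmod (cinner ((U ^^ (d * m1)) (A0 \<Omega>)) (A0 \<Omega>))" for d
      unfolding L_def norm_mult
      using norm_cinner_le[of "(U ^^ (d * (m1 + m2))) (X \<Omega>)" "X \<Omega>"]
      by (intro mult_right_mono) (simp_all add: power2_eq_square)
    moreover have "cesaro (\<lambda>d. (norm (X \<Omega>))\<^sup>2 * cmod (cinner ((U ^^ (d * m1)) (A0 \<Omega>)) (A0 \<Omega>))) \<longlonglongrightarrow> 0"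
      using tendsto_mult_right_zero[OF cesaro_cinner_pow_mult[OF m1_pos A0_orthogonal]]
      by (simp add: cesaro_mult_left[abs_def])
    ultimately show "cesaro (\<lambda>d. cmod (L d)) \<longlonglongrightarrow> 0"
      by (rule cesaro_null_comparison[rotated]) simp
  qed
qed

lemma tendsto_on_cyclic:
  assumes "X \<in> D"
  shows "cesaro (\<lambda>n. (U ^^ (n * m1)) (A ((U ^^ (n * m2)) (X \<Omega>)))) \<longlonglongrightarrow>
    (cinner (A \<Omega>) \<Omega> * cinner (X \<Omega>) \<Omega>) *\<^sub>C \<Omega>"
proof -
  have "cesaro (\<lambda>n. (U ^^ (n * (m1 + m2))) (X \<Omega>)) \<longlonglongrightarrow> cinner (X \<Omega>) \<Omega> *\<^sub>C \<Omega>"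
    by (rule cesaro_pow_mult) (use m1_pos in simp)
  then have "(\<lambda>N. cinner (A \<Omega>) \<Omega> *\<^sub>C cesaro (\<lambda>n. (U ^^ (n * (m1 + m2))) (X \<Omega>)) N + cesaro (remainder X) N)
      \<longlonglongrightarrow> cinner (A \<Omega>) \<Omega> *\<^sub>C (cinner (X \<Omega>) \<Omega> *\<^sub>C \<Omega>) + 0"
    by (intro tendsto_add tendsto_scaleC cesaro_remainder[OF assms])
  moreover have "cesaro (\<lambda>n. (U ^^ (n * m1)) (A ((U ^^ (n * m2)) (X \<Omega>)))) =
      (\<lambda>N. cinner (A \<Omega>) \<Omega> *\<^sub>C cesaro (\<lambda>n. (U ^^ (n * (m1 + m2))) (X \<Omega>)) N + cesaro (remainder X) N)"
    by (rule ext) (simp add: twisted_split[OF assms] cesaro_add cesaro_scaleC)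
  ultimately show ?thesis by (simp add: complex_vector.scale_scale)
qed

definition twisted_mean :: "'h \<Rightarrow> nat \<Rightarrow> 'h" where
  "twisted_mean \<xi> = cesaro (\<lambda>n. (U ^^ (n * m1)) (A ((U ^^ (n * m2)) \<xi>)))"

definition twisted_limit :: "'h \<Rightarrow> 'h" where
  "twisted_limit \<xi> = (cinner (A \<Omega>) \<Omega> * cinner \<xi> \<Omega>) *\<^sub>C \<Omega>"

lemma twisted_deviation_lipschitz:
  obtains C where "\<And>\<xi> \<xi>' N. \<bar>norm (twisted_mean \<xi> N - twisted_limit \<xi>) - norm (twisted_mean \<xi>' N - twisted_limit \<xi>')\<bar>
    \<le> C * dist \<xi> \<xi>'"
proof -
  define S R where "S = twisted_mean" and "R = twisted_limit"
  define c where "c = cinner (A \<Omega>) \<Omega>"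
  have A: "bounded_clinear A" using A_commutant by (rule commutant_bounded)
  then obtain K where K: "\<And>x. norm (A x) \<le> norm x * K" by (auto simp: bounded_clinear_def)
  have "\<bar>norm (S \<xi> N - R \<xi>) - norm (S \<xi>' N - R \<xi>')\<bar> \<le> (K + cmod c) * dist \<xi> \<xi>'" for \<xi> \<xi>' N
  proof -
    have "S \<xi> N - S \<xi>' N = S (\<xi> - \<xi>') N"
      by (simp only: S_def twisted_mean_def cesaro_diff[symmetric] bounded_clinear_simps(2)[OF bounded_pow]
          bounded_clinear_simps(2)[OF A])
    moreover have "R \<xi> - R \<xi>' = R (\<xi> - \<xi>')"
      by (simp add: R_def twisted_limit_def cinner_diff_left right_diff_distrib
          complex_vector.scale_left_diff_distrib)
    ultimately have diff: "S \<xi> N - R \<xi> - (S \<xi>' N - R \<xi>') = S (\<xi> - \<xi>') N - R (\<xi> - \<xi>')"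
      by (metis add_diff_add diff_add_cancel)
    have "\<bar>norm (S \<xi> N - R \<xi>) - norm (S \<xi>' N - R \<xi>')\<bar> \<le> norm (S (\<xi> - \<xi>') N - R (\<xi> - \<xi>'))"
      unfolding diff[symmetric] by (rule norm_triangle_ineq3)
    also have "\<dots> \<le> norm (S (\<xi> - \<xi>') N) + norm (R (\<xi> - \<xi>'))"
      by (rule norm_triangle_ineq4)
    also have "\<dots> \<le> norm (\<xi> - \<xi>') * K + cmod c * norm (\<xi> - \<xi>')"
    proof (rule add_mono)
      show "norm (S (\<xi> - \<xi>') N) \<le> norm (\<xi> - \<xi>') * K"
        unfolding S_def twisted_mean_def by (rule norm_cesaro_le_bound) (metis K norm_pow norm_preserving)
      show "norm (R (\<xi> - \<xi>')) \<le> cmod c * norm (\<xi> - \<xi>')"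
        using norm_cinner_le[of "\<xi> - \<xi>'" \<Omega>]
        by (simp add: R_def twisted_limit_def c_def norm_scaleC norm_mult unit mult_left_mono)
    qed
    finally show ?thesis by (simp add: dist_norm algebra_simps)
  qed
  then show thesis by (intro that[of "K + cmod c"]) (simp add: S_def R_def)
qed

text \<open>The averaging operators are uniformly bounded, so convergence on the dense set of vectors
  \<open>X \<Omega>\<close> with \<open>X \<in> D\<close> extends to all vectors.\<close>
theorem tendsto:
  "cesaro (\<lambda>n. (U ^^ (n * m1)) (A ((U ^^ (n * m2)) \<xi>))) \<longlonglongrightarrow> (cinner (A \<Omega>) \<Omega> * cinner \<xi> \<Omega>) *\<^sub>C \<Omega>"
proof -
  obtain C where lipschitz: "\<And>\<xi> \<xi>' N. \<bar>norm (twisted_mean \<xi> N - twisted_limit \<xi>) -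
      norm (twisted_mean \<xi>' N - twisted_limit \<xi>')\<bar> \<le> C * dist \<xi> \<xi>'"
    using twisted_deviation_lipschitz by blast
  have "(\<lambda>N. norm (twisted_mean \<xi> N - twisted_limit \<xi>)) \<longlonglongrightarrow> 0"
  proof (rule tendsto_zero_on_dense[OF D_cyclic lipschitz])
    fix x assume "x \<in> (\<lambda>W. W \<Omega>) ` D"
    then obtain X where "X \<in> D" and "x = X \<Omega>" by blast
    then show "(\<lambda>N. norm (twisted_mean x N - twisted_limit x)) \<longlonglongrightarrow> 0"
      using tendsto_on_cyclic[OF \<open>X \<in> D\<close>] unfolding twisted_mean_def twisted_limit_def
      by (intro tendsto_norm_zero LIM_zero) simp
  qed
  then show ?thesis
    unfolding twisted_mean_def twisted_limit_def by (rule LIM_zero_cancel[OF tendsto_norm_zero_cancel])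
qed

end

section \<open>Orthogonal projections and adjoints\<close>

lemma parallelogram_law:
  "(norm (u - v :: 'a::complex_inner))\<^sup>2 + (norm (u + v))\<^sup>2 = 2 * (norm u)\<^sup>2 + 2 * (norm v)\<^sup>2"
  by (simp add: norm_add_square norm_diff_square)

lemma minimizing_sequence_Cauchy:
  fixes k :: "nat \<Rightarrow> 'a::complex_inner"
  assumes K: "complex_vector.subspace K" and kK: "\<And>n. k n \<in> K"
    and d_le: "\<And>k. k \<in> K \<Longrightarrow> d \<le> (norm (x - k))\<^sup>2"
    and k: "\<And>n. (norm (x - k n))\<^sup>2 < d + 1 / (real n + 1)"
  shows "Cauchy k"
proof (rule CauchyI)
  have parallelogram: "(norm (a - b))\<^sup>2 \<le> 2 * (norm (x - a))\<^sup>2 + 2 * (norm (x - b))\<^sup>2 - 4 * d"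
    if "a \<in> K" "b \<in> K" for a b
  proof -
    have "(1/2::real) *\<^sub>R (a + b) \<in> K"
      using that K by (simp add: scaleR_scaleC complex_vector.subspace_add complex_vector.subspace_scale)
    then have "4 * d \<le> (norm (2 *\<^sub>R (x - (1/2::real) *\<^sub>R (a + b))))\<^sup>2"
      using d_le by (simp add: power2_eq_square)
    moreover have "2 *\<^sub>R (x - (1/2::real) *\<^sub>R (a + b)) = (x - a) + (x - b)"
      by (simp add: algebra_simps scaleR_2)
    ultimately show ?thesis
      using parallelogram_law[of "x - a" "x - b"] by (simp add: norm_minus_commute)
  qed
  fix e :: real assume "e > 0"
  obtain M :: nat where "4 / e\<^sup>2 < real M" using reals_Archimedean2 by blast
  then have "4 < real M * e\<^sup>2" using \<open>e > 0\<close> by (simp add: pos_divide_less_eq)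
  also have "\<dots> < (real M + 1) * e\<^sup>2" using \<open>e > 0\<close> by (simp add: distrib_right)
  finally have M: "4 / (real M + 1) < e\<^sup>2" by (simp add: pos_divide_less_eq mult.commute)
  show "\<exists>M. \<forall>m\<ge>M. \<forall>n\<ge>M. norm (k m - k n) < e"
  proof (intro exI allI impI)
    fix m n assume "m \<ge> M" "n \<ge> M"
    have "(norm (k m - k n))\<^sup>2 \<le> 2 * (1 / (real m + 1)) + 2 * (1 / (real n + 1))"
      using parallelogram[OF kK kK, of m n] k[of m] k[of n] by simp
    also have "\<dots> \<le> 2 * (1 / (real M + 1)) + 2 * (1 / (real M + 1))"
      using \<open>m \<ge> M\<close> \<open>n \<ge> M\<close> by (intro add_mono mult_left_mono divide_left_mono) auto
    also have "\<dots> = 4 / (real M + 1)" by simp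
    finally have "(norm (k m - k n))\<^sup>2 < e\<^sup>2" using M by linarith
    then show "norm (k m - k n) < e"
      using \<open>e > 0\<close> by (simp add: power_less_imp_less_base)
  qed
qed

lemma nearest_point_exists:
  fixes K :: "'a::chilbert_space set"
  assumes "closed K" and K: "complex_vector.subspace K"
  shows "\<exists>p\<in>K. \<forall>k\<in>K. norm (x - p) \<le> norm (x - k)"
proof -
  define d where "d = (INF k\<in>K. (norm (x - k))\<^sup>2)"
  have "K \<noteq> {}" using complex_vector.subspace_0[OF K] by blast
  have d_le: "d \<le> (norm (x - k))\<^sup>2" if "k \<in> K" for k
    unfolding d_def using that by (intro cINF_lower bdd_belowI2[where m = 0]) simp_all
  have "bdd_below ((\<lambda>k. (norm (x - k))\<^sup>2) ` K)"
    by (rule bdd_belowI2[where m = 0]) simp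
  then have "\<exists>k\<in>K. (norm (x - k))\<^sup>2 < d + 1 / (real n + 1)" for n
    using cINF_less_iff[OF \<open>K \<noteq> {}\<close>, of "\<lambda>k. (norm (x - k))\<^sup>2" "d + 1 / (real n + 1)"]
    by (simp add: d_def[symmetric])
  then obtain k where kK: "\<And>n. k n \<in> K" and k: "\<And>n. (norm (x - k n))\<^sup>2 < d + 1 / (real n + 1)"
    by metis
  then obtain p where lim: "k \<longlonglongrightarrow> p"
    using minimizing_sequence_Cauchy[OF K kK d_le k] Cauchy_convergent convergent_def by blast
  have "p \<in> K" by (rule closed_sequentially[OF \<open>closed K\<close> kK lim])
  have "(norm (x - p))\<^sup>2 \<le> d"
  proof (rule tendsto_le[OF sequentially_bot])
    show "(\<lambda>n. (norm (x - k n))\<^sup>2) \<longlonglongrightarrow> (norm (x - p))\<^sup>2"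
      by (intro tendsto_intros lim)
    show "(\<lambda>n. d + 1 / (real n + 1)) \<longlonglongrightarrow> d"
      using tendsto_add[OF tendsto_const LIMSEQ_inverse_real_of_nat, of d]
      by (simp add: inverse_eq_divide add.commute)
    show "\<forall>\<^sub>F n in sequentially. (norm (x - k n))\<^sup>2 \<le> d + 1 / (real n + 1)"
      using k less_imp_le by (intro always_eventually) blast
  qed
  then show ?thesis
    using \<open>p \<in> K\<close> d_le by (metis norm_ge_zero order_trans power2_le_imp_le)
qed

lemma nearest_point_orthogonal:
  fixes K :: "'a::complex_inner set"
  assumes K: "complex_vector.subspace K" and "p \<in> K" and nearest: "\<forall>k\<in>K. norm (x - p) \<le> norm (x - k)"
    and "k \<in> K"
  shows "cinner (x - p) k = 0"
proof (cases "k = 0")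
  case False
  define a where "a = cinner (x - p) k"
  define n where "n = (norm k)\<^sup>2"
  have "n > 0" using False by (simp add: n_def)
  define t where "t = a / complex_of_real n"
  have "p + t *\<^sub>C k \<in> K"
    using K \<open>p \<in> K\<close> \<open>k \<in> K\<close> by (simp add: complex_vector.subspace_add complex_vector.subspace_scale)
  then have "(norm (x - p))\<^sup>2 \<le> (norm ((x - p) - t *\<^sub>C k))\<^sup>2"
    using nearest by (simp add: algebra_simps power_mono)
  also have "\<dots> = (norm (x - p))\<^sup>2 + (norm (t *\<^sub>C k))\<^sup>2 - 2 * Re (cinner (x - p) (t *\<^sub>C k))"
    by (rule norm_diff_square)
  also have "(norm (t *\<^sub>C k))\<^sup>2 = (cmod a)\<^sup>2 / n"
  proof -
    have "(norm (t *\<^sub>C k))\<^sup>2 = (cmod t)\<^sup>2 * n"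
      by (simp add: norm_scaleC power_mult_distrib n_def)
    also have "cmod t = cmod a / n" using \<open>n > 0\<close> by (simp add: t_def norm_divide)
    also have "(cmod a / n)\<^sup>2 * n = (cmod a)\<^sup>2 / n" using \<open>n > 0\<close> by (simp add: power2_eq_square)
    finally show ?thesis .
  qed
  also have "Re (cinner (x - p) (t *\<^sub>C k)) = (cmod a)\<^sup>2 / n"
    using \<open>n > 0\<close>
    by (simp add: cinner_scaleC_right t_def a_def[symmetric] complex_mult_cnj cmod_power2 mult.commute)
  finally have "(cmod a)\<^sup>2 \<le> 0"
    using \<open>n > 0\<close> by (simp add: divide_le_0_iff)
  then show ?thesis by (simp add: a_def)
qed simp

definition proj :: "'a::chilbert_space set \<Rightarrow> 'a \<Rightarrow> 'a" where
  "proj K x = (SOME p. p \<in> K \<and> (\<forall>k\<in>K. cinner (x - p) k = 0))"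

context
  fixes K :: "'a::chilbert_space set"
  assumes closed: "closed K" and subspace: "complex_vector.subspace K"
begin

lemma proj_mem: "proj K x \<in> K" and proj_orthogonal: "k \<in> K \<Longrightarrow> cinner (x - proj K x) k = 0"
proof -
  obtain p where "p \<in> K" and nearest: "\<forall>k\<in>K. norm (x - p) \<le> norm (x - k)"
    using nearest_point_exists[OF closed subspace] by blast
  then have "p \<in> K \<and> (\<forall>k\<in>K. cinner (x - p) k = 0)"
    using nearest_point_orthogonal[OF subspace \<open>p \<in> K\<close> nearest] by blast
  then have "proj K x \<in> K \<and> (\<forall>k\<in>K. cinner (x - proj K x) k = 0)"
    unfolding proj_def by (rule someI)
  then show "proj K x \<in> K" and "k \<in> K \<Longrightarrow> cinner (x - proj K x) k = 0" by blast+
qed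

lemma proj_eqI:
  assumes "p \<in> K" and "\<And>k. k \<in> K \<Longrightarrow> cinner (x - p) k = 0"
  shows "proj K x = p"
proof -
  have "proj K x - p \<in> K"
    using subspace proj_mem assms(1) by (rule complex_vector.subspace_diff)
  then have "cinner (x - p) (proj K x - p) - cinner (x - proj K x) (proj K x - p) = 0"
    by (simp add: assms(2) proj_orthogonal)
  moreover have "(x - p) - (x - proj K x) = proj K x - p" by simp
  ultimately have "cinner (proj K x - p) (proj K x - p) = 0"
    by (metis cinner_diff_left)
  then show ?thesis by simp
qed

lemma bounded_clinear_proj: "bounded_clinear (proj K)"
  unfolding bounded_clinear_def clinear_def
proof (intro conjI allI exI[of _ 1])
  fix x y :: 'a and c :: complex
  show "proj K (x + y) = proj K x + proj K y"
  proof (rule proj_eqI)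
    show "proj K x + proj K y \<in> K"
      using subspace proj_mem proj_mem by (rule complex_vector.subspace_add)
    fix k assume "k \<in> K"
    have "x + y - (proj K x + proj K y) = (x - proj K x) + (y - proj K y)" by simp
    then show "cinner (x + y - (proj K x + proj K y)) k = 0"
      by (simp only: cinner_add_left proj_orthogonal[OF \<open>k \<in> K\<close>]) simp
  qed
  show "proj K (c *\<^sub>C x) = c *\<^sub>C proj K x"
  proof (rule proj_eqI)
    show "c *\<^sub>C proj K x \<in> K"
      using subspace proj_mem by (rule complex_vector.subspace_scale)
    fix k assume "k \<in> K"
    have "c *\<^sub>C x - c *\<^sub>C proj K x = c *\<^sub>C (x - proj K x)"
      by (simp add: complex_vector.scale_right_diff_distrib)
    then show "cinner (c *\<^sub>C x - c *\<^sub>C proj K x) k = 0"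
      by (simp only: cinner_scaleC_left proj_orthogonal[OF \<open>k \<in> K\<close>]) simp
  qed
  have "cinner (proj K x) (x - proj K x) = 0"
    using proj_orthogonal[OF proj_mem, of x] by (metis cinner_commute complex_cnj_zero)
  then have "(norm x)\<^sup>2 = (norm (proj K x))\<^sup>2 + (norm (x - proj K x))\<^sup>2"
    using norm_add_square[of "proj K x" "x - proj K x"] by simp
  then show "norm (proj K x) \<le> norm x * 1"
    by (simp add: power2_le_imp_le)
qed

end

lemma riesz_representation:
  fixes f :: "'a::chilbert_space \<Rightarrow> complex"
  assumes add: "\<And>x y. f (x + y) = f x + f y" and scale: "\<And>c x. f (c *\<^sub>C x) = c * f x"
    and bounded: "\<And>x. cmod (f x) \<le> norm x * B"
  shows "\<exists>z. \<forall>x. f x = cinner x z"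
proof (cases "\<forall>x. f x = 0")
  case False
  then obtain x0 where "f x0 \<noteq> 0" by blast
  have f: "bounded_linear f"
    by (rule bounded_linear_intro[where K = B])
      (simp_all add: add bounded scale[of "of_real r" for r, folded scaleR_scaleC] scaleR_conv_of_real)
  define N where "N = {x. f x = 0}"
  have "closed N"
    unfolding N_def by (rule closed_Collect_eq) (auto intro: linear_continuous_on[OF f] continuous_intros)
  have N: "complex_vector.subspace N"
    unfolding complex_vector.subspace_def N_def by (simp add: add scale linear_simps(3)[OF f])
  define w where "w = x0 - proj N x0"
  have "f w = f x0"
    using proj_mem[OF \<open>closed N\<close> N, of x0] by (simp add: w_def N_def linear_simps[OF f])
  have w_orthogonal: "cinner w k = 0" if "k \<in> N" for k
    using proj_orthogonal[OF \<open>closed N\<close> N that] by (simp add: w_def)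
  define n where "n = (norm w)\<^sup>2"
  have "n > 0" using \<open>f w = f x0\<close> \<open>f x0 \<noteq> 0\<close> linear_simps(3)[OF f] by (auto simp: n_def)
  show ?thesis
  proof (intro exI allI)
    fix x
    have "x - (f x / f w) *\<^sub>C w \<in> N"
      using \<open>f w = f x0\<close> \<open>f x0 \<noteq> 0\<close> by (simp add: N_def linear_simps[OF f] scale)
    then have "cinner (x - (f x / f w) *\<^sub>C w) w = 0"
      using w_orthogonal by (metis cinner_commute complex_cnj_zero)
    then have "cinner x w = (f x / f w) * of_real n"
      by (simp add: cinner_diff_left cinner_scaleC_left cinner_self_norm n_def)
    then show "f x = cinner x ((cnj (f w) / of_real n) *\<^sub>C w)"
      using \<open>n > 0\<close> \<open>f w = f x0\<close> \<open>f x0 \<noteq> 0\<close> by (simp add: cinner_scaleC_right)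
  qed
qed (auto intro: exI[of _ 0])

definition cadjoint :: "('a::chilbert_space \<Rightarrow> 'a) \<Rightarrow> 'a \<Rightarrow> 'a" where
  "cadjoint T v = (SOME z. \<forall>x. cinner (T x) v = cinner x z)"

lemma cinner_cadjoint:
  assumes T: "bounded_clinear T"
  shows "cinner (T x) v = cinner x (cadjoint T v)"
proof -
  obtain K where K: "\<And>x. norm (T x) \<le> norm x * K" "K \<ge> 0"
    using bounded_linear.nonneg_bounded[OF bounded_clinear_bounded_linear[OF T]] by blast
  have "\<exists>z. \<forall>x. cinner (T x) v = cinner x z"
  proof (rule riesz_representation[where B = "K * norm v"])
    show "cinner (T (x + y)) v = cinner (T x) v + cinner (T y) v" for x y
      by (simp add: bounded_clinear_simps[OF T] cinner_add_left)
    show "cinner (T (c *\<^sub>C x)) v = c * cinner (T x) v" for c x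
      by (simp add: bounded_clinear_scaleC[OF T] cinner_scaleC_left)
    show "cmod (cinner (T x) v) \<le> norm x * (K * norm v)" for x
    proof -
      have "cmod (cinner (T x) v) \<le> norm (T x) * norm v" by (rule norm_cinner_le)
      also have "\<dots> \<le> norm x * K * norm v" by (rule mult_right_mono[OF K(1)]) simp
      finally show ?thesis by (simp add: mult.assoc)
    qed
  qed
  then show ?thesis
    unfolding cadjoint_def by (rule someI_ex[where P = "\<lambda>z. \<forall>x. cinner (T x) v = cinner x z", THEN spec])
qed

lemma bounded_clinear_cadjoint:
  assumes T: "bounded_clinear T"
  shows "bounded_clinear (cadjoint T)"
proof -
  obtain K where K: "\<And>x. norm (T x) \<le> norm x * K" "K \<ge> 0"
    using bounded_linear.nonneg_bounded[OF bounded_clinear_bounded_linear[OF T]] by blast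
  have "norm (cadjoint T x) \<le> norm x * K" for x
  proof -
    have "(norm (cadjoint T x))\<^sup>2 = cmod (cinner (cadjoint T x) (cadjoint T x))"
      by (simp add: cinner_self_norm norm_power)
    also have "cinner (cadjoint T x) (cadjoint T x) = cinner (T (cadjoint T x)) x"
      by (simp add: cinner_cadjoint[OF T])
    also have "cmod \<dots> \<le> norm (T (cadjoint T x)) * norm x" by (rule norm_cinner_le)
    also have "\<dots> \<le> norm (cadjoint T x) * K * norm x" by (rule mult_right_mono[OF K(1)]) simp
    finally show ?thesis
      by (cases "cadjoint T x = 0") (simp_all add: power2_eq_square mult_ac K(2))
  qed
  moreover have "cadjoint T (x + y) = cadjoint T x + cadjoint T y" for x y
    by (rule cinner_eqI) (simp add: cinner_cadjoint[OF T, symmetric] cinner_add_right)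
  moreover have "cadjoint T (c *\<^sub>C x) = c *\<^sub>C cadjoint T x" for c x
    by (rule cinner_eqI) (simp add: cinner_cadjoint[OF T, symmetric] cinner_scaleC_right)
  ultimately show ?thesis
    unfolding bounded_clinear_def clinear_def by blast
qed

lemma adjoint_pair_cadjoint: "bounded_clinear T \<Longrightarrow> adjoint_pair T (cadjoint T)"
  by (simp add: adjoint_pair_def cinner_cadjoint)

lemma cadjoint_mem_commutant:
  fixes S :: "('a::chilbert_space \<Rightarrow> 'a) set"
  assumes "star_closed S" and T: "T \<in> commutant S"
  shows "cadjoint T \<in> commutant S"
proof (rule commutantI)
  have T': "bounded_clinear T" using T by (rule commutant_bounded)
  then show "bounded_clinear (cadjoint T)" by (rule bounded_clinear_cadjoint)
  fix X v assume "X \<in> S"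
  then obtain Y where "Y \<in> S" and XY: "adjoint_pair X Y"
    using assms(1) by (auto simp: star_closed_def)
  show "cadjoint T (X v) = X (cadjoint T v)"
  proof (rule cinner_eqI)
    fix u
    have "cinner u (cadjoint T (X v)) = cinner (T u) (X v)"
      by (rule cinner_cadjoint[OF T', symmetric])
    also have "\<dots> = cinner (Y (T u)) v"
      using adjoint_pair_sym[OF XY] by (simp add: adjoint_pair_def)
    also have "\<dots> = cinner (T (Y u)) v"
      by (simp add: commutant_commute[OF T \<open>Y \<in> S\<close>])
    also have "\<dots> = cinner (Y u) (cadjoint T v)"
      by (rule cinner_cadjoint[OF T'])
    also have "\<dots> = cinner u (X (cadjoint T v))"
      using adjoint_pair_sym[OF XY] by (simp add: adjoint_pair_def)
    finally show "cinner u (cadjoint T (X v)) = cinner u (X (cadjoint T v))" .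
  qed
qed

lemma closure_subspace:
  fixes S :: "'a::complex_normed_vector set"
  assumes S: "complex_vector.subspace S"
  shows "complex_vector.subspace (closure S)"
  unfolding complex_vector.subspace_def
proof (intro conjI ballI allI)
  show "0 \<in> closure S" using complex_vector.subspace_0[OF S] closure_subset by blast
  fix a b assume "a \<in> closure S" "b \<in> closure S"
  then have "a + b \<in> closure (S + S)"
    using closure_sum[of S S] by (auto intro: set_plus_intro)
  moreover have "S + S \<subseteq> S"
    using complex_vector.subspace_add[OF S] by (auto elim!: set_plus_elim)
  ultimately show "a + b \<in> closure S" using closure_mono by blast
next
  fix c and a assume "a \<in> closure S"
  have "continuous_on (closure S) (\<lambda>x. c *\<^sub>C x)"
    using bounded_clinear_scaleC_left[OF bounded_clinear_id, of c]
    by (intro linear_continuous_on bounded_clinear_bounded_linear)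
  then have "(\<lambda>x. c *\<^sub>C x) ` closure S \<subseteq> closure S"
    using complex_vector.subspace_scale[OF S] closure_subset by (intro image_closure_subset) auto
  then show "c *\<^sub>C a \<in> closure S" using \<open>a \<in> closure S\<close> by blast
qed

context
  fixes S :: "('h::chilbert_space \<Rightarrow> 'h) set" and \<Omega> :: 'h
  assumes bounded: "\<And>X. X \<in> S \<Longrightarrow> bounded_clinear X" and star_closed: "star_closed S"
begin

lemma subspace_commutant_orbit: "complex_vector.subspace (closure ((\<lambda>W. W \<Omega>) ` commutant S))"
proof (rule closure_subspace)
  show "complex_vector.subspace ((\<lambda>W. W \<Omega>) ` commutant S)"
    unfolding complex_vector.subspace_def
    using zero_mem_commutant[OF bounded] add_mem_commutant[OF bounded] scaleC_mem_commutant[OF bounded]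
    by (auto intro!: image_eqI)
qed

lemma commutant_orbit_invariant:
  assumes T: "T \<in> commutant S" and "k \<in> closure ((\<lambda>W. W \<Omega>) ` commutant S)"
  shows "T k \<in> closure ((\<lambda>W. W \<Omega>) ` commutant S)"
proof -
  have "T (W \<Omega>) \<in> (\<lambda>W. W \<Omega>) ` commutant S" if "W \<in> commutant S" for W
    using compose_mem_commutant[OF T that] by (intro image_eqI[where x = "T \<circ> W"]) simp_all
  then have "T ` ((\<lambda>W. W \<Omega>) ` commutant S) \<subseteq> closure ((\<lambda>W. W \<Omega>) ` commutant S)"
    using closure_subset by blast
  moreover have "continuous_on (closure ((\<lambda>W. W \<Omega>) ` commutant S)) T"
    by (intro linear_continuous_on bounded_clinear_bounded_linear commutant_bounded[OF T])
  ultimately show ?thesis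
    using image_closure_subset[of _ T] assms(2) by blast
qed

lemma proj_commutant_orbit: "proj (closure ((\<lambda>W. W \<Omega>) ` commutant S)) \<in> commutant (commutant S)"
proof (rule commutantI)
  define K where "K = closure ((\<lambda>W. W \<Omega>) ` commutant S)"
  have K: "closed K" "complex_vector.subspace K"
    unfolding K_def by (simp_all add: subspace_commutant_orbit)
  show "bounded_clinear (proj K)" by (rule bounded_clinear_proj[OF K])
  fix T x assume T: "T \<in> commutant S"
  have Tb: "bounded_clinear T" by (rule commutant_bounded[OF T])
  show "proj K (T x) = T (proj K x)"
  proof (rule proj_eqI[OF K])
    show "T (proj K x) \<in> K"
      unfolding K_def by (rule commutant_orbit_invariant[OF T proj_mem[OF K, unfolded K_def]])
    fix k assume "k \<in> K"
    have "cinner (T x - T (proj K x)) k = cinner (T (x - proj K x)) k"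
      by (simp add: bounded_clinear_simps(2)[OF Tb])
    also have "\<dots> = cinner (x - proj K x) (cadjoint T k)"
      by (rule cinner_cadjoint[OF Tb])
    also have "\<dots> = 0"
      using commutant_orbit_invariant[OF cadjoint_mem_commutant[OF star_closed T] \<open>k \<in> K\<close>[unfolded K_def]]
      by (intro proj_orthogonal[OF K]) (simp add: K_def)
    finally show "cinner (T x - T (proj K x)) k = 0" .
  qed
qed

text \<open>A separating vector for \<open>S''\<close> is cyclic for \<open>S'\<close>: the complement of the projection onto
  the closure of \<open>S' \<Omega>\<close> is in \<open>S''\<close> and annihilates \<open>\<Omega>\<close>.\<close>
lemma cyclic_commutant:
  assumes separating: "separating_vector \<Omega> (commutant (commutant S))"
  shows "closure ((\<lambda>W. W \<Omega>) ` commutant S) = UNIV"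
proof -
  define K where "K = closure ((\<lambda>W. W \<Omega>) ` commutant S)"
  have K: "closed K" "complex_vector.subspace K"
    unfolding K_def by (simp_all add: subspace_commutant_orbit)
  have "(\<lambda>x. x - proj K x) \<in> commutant (commutant S)"
    unfolding K_def using proj_commutant_orbit
    by (intro diff_mem_commutant id_mem_commutant) (simp_all add: commutant_bounded)
  moreover have "\<Omega> \<in> K"
    unfolding K_def using id_mem_commutant closure_subset by fastforce
  then have "proj K \<Omega> = \<Omega>"
    by (rule proj_eqI[OF K]) simp
  ultimately have "(\<lambda>x. x - proj K x) = (\<lambda>_. 0)"
    using separating by (simp add: separating_vector_def)
  then have "x \<in> K" for x
    using proj_mem[OF K, of x] by (metis eq_iff_diff_eq_0)
  then show ?thesis by (auto simp: K_def)
qed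

end

section \<open>The GNS representation of a \<open>C\<^sup>*\<close>-dynamical system\<close>

locale covariant_gns =
  fixes \<alpha> :: "'a::cstar_algebra \<Rightarrow> 'a" and \<omega> :: "'a \<Rightarrow> complex"
    and \<pi> :: "'a \<Rightarrow> 'h::chilbert_space \<Rightarrow> 'h" and U :: "'h \<Rightarrow> 'h" and \<Omega> :: 'h
  assumes dynamical: "cstar_dynamical_system \<alpha> \<omega>"
    and covariant: "gns_covariant \<alpha> \<omega> \<pi> U \<Omega>"
begin

sublocale unitary_operator U
  using covariant by unfold_locales (auto simp: gns_covariant_def)

lemma cyclic: "closure (range (\<lambda>a. \<pi> a \<Omega>)) = UNIV"
  and state: "\<omega> a = cinner (\<pi> a \<Omega>) \<Omega>"
  and U_cyclic: "U (\<pi> a \<Omega>) = \<pi> (\<alpha> a) \<Omega>"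
  using covariant by (simp_all add: gns_covariant_def gns_triple_def)

lemma bounded_\<pi>: "bounded_clinear (\<pi> a)"
  and \<pi>_mult: "\<pi> (a * b) = \<pi> a \<circ> \<pi> b"
  and adjoint_pair_\<pi>: "adjoint_pair (\<pi> a) (\<pi> (cstar a))"
  using covariant by (simp_all add: gns_covariant_def gns_triple_def star_rep_def adjoint_pair_def)

lemma star_closed_range: "star_closed (range \<pi>)"
  using adjoint_pair_\<pi> by (auto simp: star_closed_def)

lemma bij_\<alpha>: "bij \<alpha>"
  and \<alpha>_mult: "\<alpha> (a * b) = \<alpha> a * \<alpha> b"
  and \<omega>_\<alpha>: "\<omega> (\<alpha> a) = \<omega> a"
  and state_norm: "(SUP x\<in>{x. norm x \<le> 1}. cmod (\<omega> x)) = 1"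
  using dynamical by (simp_all add: cstar_dynamical_system_def star_automorphism_def is_state_def)

lemma covariance: "U (\<pi> a x) = \<pi> (\<alpha> a) (U x)"
proof -
  have "U (\<pi> a (\<pi> b \<Omega>)) = \<pi> (\<alpha> a) (U (\<pi> b \<Omega>))" for b
  proof -
    have "U (\<pi> a (\<pi> b \<Omega>)) = U (\<pi> (a * b) \<Omega>)" by (simp add: \<pi>_mult)
    also have "\<dots> = \<pi> (\<alpha> a) (\<pi> (\<alpha> b) \<Omega>)" by (simp only: U_cyclic \<alpha>_mult) (simp add: \<pi>_mult)
    finally show ?thesis by (simp add: U_cyclic)
  qed
  then have "U (\<pi> a x) - \<pi> (\<alpha> a) (U x) = 0" if "x \<in> range (\<lambda>b. \<pi> b \<Omega>)" for x
    using that by auto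
  moreover have "bounded_clinear (\<lambda>x. U (\<pi> a x) - \<pi> (\<alpha> a) (U x))"
    using bounded_clinear_diff[OF bounded_clinear_compose[OF bounded bounded_\<pi>]
        bounded_clinear_compose[OF bounded_\<pi> bounded]]
    by (simp add: o_def)
  then have "continuous_on (closure (range (\<lambda>b. \<pi> b \<Omega>))) (\<lambda>x. U (\<pi> a x) - \<pi> (\<alpha> a) (U x))"
    by (intro linear_continuous_on bounded_clinear_bounded_linear)
  ultimately have "U (\<pi> a x) - \<pi> (\<alpha> a) (U x) = 0"
    using continuous_constant_on_closure[of "range (\<lambda>b. \<pi> b \<Omega>)"] cyclic by blast
  then show ?thesis by simp
qed

lemma conj_\<pi>: "U \<circ> \<pi> a \<circ> inv U = \<pi> (\<alpha> a)" and conj_inv_\<pi>: "inv U \<circ> \<pi> a \<circ> U = \<pi> (inv \<alpha> a)"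
proof -
  show "U \<circ> \<pi> a \<circ> inv U = \<pi> (\<alpha> a)"
    by (simp add: fun_eq_iff covariance)
  have "\<pi> a (U x) = U (\<pi> (inv \<alpha> a) x)" for x
    using bij_\<alpha> by (simp add: covariance bij_is_surj surj_f_inv_f)
  then show "inv U \<circ> \<pi> a \<circ> U = \<pi> (inv \<alpha> a)"
    by (simp add: fun_eq_iff)
qed

lemma fixed: "U \<Omega> = \<Omega>"
proof -
  have "cinner (U \<Omega> - \<Omega>) (\<pi> a \<Omega>) = 0" for a
  proof -
    obtain b where "a = \<alpha> b"
      using surjD[OF bij_is_surj[OF bij_\<alpha>]] by blast
    have "cinner (U \<Omega>) (\<pi> a \<Omega>) = cinner \<Omega> (\<pi> b \<Omega>)"
      by (simp add: \<open>a = \<alpha> b\<close> U_cyclic[symmetric])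
    also have "\<dots> = cnj (\<omega> b)"
      by (simp add: state cinner_commute[of \<Omega>])
    also have "\<dots> = cinner \<Omega> (\<pi> a \<Omega>)"
      using \<omega>_\<alpha>[of b] by (simp add: \<open>a = \<alpha> b\<close> state cinner_commute[of \<Omega>])
    finally show ?thesis by (simp add: cinner_diff_left)
  qed
  then have "U \<Omega> - \<Omega> = 0"
    using cinner_eq_zero_on_dense[OF cyclic] by blast
  then show ?thesis by simp
qed

lemma pow_cyclic: "(U ^^ n) (\<pi> a \<Omega>) = \<pi> ((\<alpha> ^^ n) a) \<Omega>"
  by (induction n) (simp_all add: U_cyclic)

lemma pow_fixed: "(U ^^ n) \<Omega> = \<Omega>"
  by (induction n) (simp_all add: fixed)

lemma mixing:
  assumes "weakly_mixing \<alpha> \<omega>"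
  shows "cesaro (\<lambda>n. cmod (cinner ((U ^^ n) u) v - cinner u \<Omega> * cinner \<Omega> v)) \<longlonglongrightarrow> 0"
proof (rule mixing_on_dense[OF cyclic])
  fix u v assume "u \<in> range (\<lambda>a. \<pi> a \<Omega>)" "v \<in> range (\<lambda>a. \<pi> a \<Omega>)"
  then obtain a b where u: "u = \<pi> a \<Omega>" and v: "v = \<pi> b \<Omega>" by blast
  have "cinner ((U ^^ n) u) v = \<omega> (cstar b * (\<alpha> ^^ n) a)" for n
    using adjoint_pair_\<pi>[of "cstar b"]
    by (simp add: u v pow_cyclic state \<pi>_mult adjoint_pair_def cstar_cstar)
  moreover have "cinner u \<Omega> * cinner \<Omega> v = \<omega> (cstar b) * \<omega> a"
    using adjoint_pair_\<pi>[of "cstar b"]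
    by (simp add: u v state adjoint_pair_def cstar_cstar mult.commute)
  ultimately show "cesaro (\<lambda>n. cmod (cinner ((U ^^ n) u) v - cinner u \<Omega> * cinner \<Omega> v)) \<longlonglongrightarrow> 0"
    using assms by (simp add: weakly_mixing_def cesaro_real[abs_def])
qed

lemma cyclic_vector_nonzero: "\<Omega> \<noteq> 0"
proof
  assume "\<Omega> = 0"
  then have "(SUP x\<in>{x. norm x \<le> 1}. cmod (\<omega> x)) = (SUP x\<in>{x::'a. norm x \<le> 1}. 0::real)"
    by (simp add: state)
  also have "\<dots> = 0" by (rule cSUP_const) (auto intro: exI[of _ 0])
  finally show False using state_norm by simp
qed

text \<open>The algebra need not be unital, so \<open>\<parallel>\<Omega>\<parallel> = 1\<close> is not read off from \<open>\<omega>\<close>; instead mixing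
  for the fixed vector \<open>\<Omega>\<close> forces \<open>\<parallel>\<Omega>\<parallel>\<^sup>2 = \<parallel>\<Omega>\<parallel>\<^sup>4\<close>.\<close>
lemma unit_cyclic_vector:
  assumes "weakly_mixing \<alpha> \<omega>"
  shows "norm \<Omega> = 1"
proof -
  have "(\<lambda>N. cesaro (\<lambda>n. cmod (cinner \<Omega> \<Omega> - cinner \<Omega> \<Omega> * cinner \<Omega> \<Omega>)) N) \<longlonglongrightarrow> 0"
    using mixing[OF assms, of \<Omega> \<Omega>] by (simp add: pow_fixed)
  then have "cinner \<Omega> \<Omega> = cinner \<Omega> \<Omega> * cinner \<Omega> \<Omega>"
    using LIMSEQ_unique[OF cesaro_const] by fastforce
  then have "complex_of_real ((norm \<Omega>)\<^sup>2) = complex_of_real ((norm \<Omega>)\<^sup>2 * (norm \<Omega>)\<^sup>2)"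
    by (simp only: cinner_self_norm of_real_mult)
  then have "(norm \<Omega>)\<^sup>2 = 1"
    using cyclic_vector_nonzero by (metis of_real_eq_iff mult_cancel_left1 norm_eq_zero zero_eq_power2)
  then show "norm \<Omega> = 1"
    using norm_ge_zero[of \<Omega>] by (auto simp: power2_eq_1_iff)
qed

lemma weakly_mixing_unitary:
  assumes "weakly_mixing \<alpha> \<omega>"
  shows "weakly_mixing_unitary U \<Omega>"
  by unfold_locales (simp_all add: fixed unit_cyclic_vector[OF assms] mixing[OF assms])

lemma twisted_average_commutant:
  assumes "weakly_mixing \<alpha> \<omega>" and separating: "separating_vector \<Omega> (commutant (commutant (range \<pi>)))"
    and "0 < m1" "0 < m2" and "A \<in> commutant (commutant (range \<pi>))"
  shows "twisted_average U \<Omega> (commutant (range \<pi>)) A m1 m2"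
proof (intro twisted_average.intro[OF weakly_mixing_unitary[OF assms(1)]] twisted_average_axioms.intro)
  have range: "\<And>X. X \<in> range \<pi> \<Longrightarrow> bounded_clinear X"
    using bounded_\<pi> by blast
  show "bounded_clinear W" if "W \<in> commutant (range \<pi>)" for W
    using that by (rule commutant_bounded)
  show "star_closed (commutant (range \<pi>))"
    unfolding star_closed_def
    using cadjoint_mem_commutant[OF star_closed_range] adjoint_pair_cadjoint commutant_bounded by blast
  show "U \<circ> W \<circ> inv U \<in> commutant (range \<pi>)" if "W \<in> commutant (range \<pi>)" for W
    using conj_inv_\<pi> by (intro commutant_conj[OF bounded bounded_inv apply_inv inv_apply _ that]) auto
  show "inv U \<circ> W \<circ> U \<in> commutant (range \<pi>)" if "W \<in> commutant (range \<pi>)" for W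
    using conj_\<pi> by (intro commutant_conj[OF bounded_inv bounded inv_apply apply_inv _ that]) auto
  show "closure ((\<lambda>W. W \<Omega>) ` commutant (range \<pi>)) = UNIV"
    by (rule cyclic_commutant[OF range star_closed_range separating])
qed (use assms in simp_all)

lemma twisted_average_range:
  assumes "weakly_mixing \<alpha> \<omega>" and "0 < m1" "0 < m2" and "A \<in> commutant (range \<pi>)"
  shows "twisted_average U \<Omega> (range \<pi>) A m1 m2"
proof (intro twisted_average.intro[OF weakly_mixing_unitary[OF assms(1)]] twisted_average_axioms.intro)
  show "U \<circ> W \<circ> inv U \<in> range \<pi>" and "inv U \<circ> W \<circ> U \<in> range \<pi>" if "W \<in> range \<pi>" for W
    using that conj_\<pi> conj_inv_\<pi> by auto
  show "closure ((\<lambda>W. W \<Omega>) ` range \<pi>) = UNIV"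
    using cyclic by (simp add: image_image)
qed (use assms bounded_\<pi> star_closed_range in auto)

end

theorem proposition5p5:
  fixes \<alpha> :: "'a::cstar_algebra \<Rightarrow> 'a" and \<omega> :: "'a \<Rightarrow> complex"
    and \<pi> :: "'a \<Rightarrow> 'h::chilbert_space \<Rightarrow> 'h" and U :: "'h \<Rightarrow> 'h" and \<Omega> :: 'h
    and m1 m2 :: nat and A :: "'h \<Rightarrow> 'h"
  assumes "cstar_dynamical_system \<alpha> \<omega>"
    and "weakly_mixing \<alpha> \<omega>"
    and "gns_covariant \<alpha> \<omega> \<pi> U \<Omega>"
    and "separating_vector \<Omega> (commutant (commutant (range \<pi>)))"
    and "0 < m1" and "m1 < m2"
    and "A \<in> commutant (commutant (range \<pi>)) \<union> commutant (commutant (commutant (range \<pi>)))"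
  shows "\<forall>\<xi>. (\<lambda>N. complex_of_real (1 / real N) *\<^sub>C
                  (\<Sum>n<N. (U ^^ (n * m1)) (A ((U ^^ (n * m2)) \<xi>))))
             \<longlonglongrightarrow> (cinner (A \<Omega>) \<Omega> * cinner \<xi> \<Omega>) *\<^sub>C \<Omega>"
proof
  fix \<xi>
  interpret covariant_gns \<alpha> \<omega> \<pi> U \<Omega>
    using assms(1,3) by unfold_locales
  have "0 < m2" using assms(5,6) by simp
  have "commutant (commutant (commutant (range \<pi>))) \<subseteq> commutant (range \<pi>)"
    using commutant_antimono[OF subset_bicommutant[of "range \<pi>"]] bounded_\<pi> by blast
  then obtain D where "twisted_average U \<Omega> D A m1 m2"
    using assms(7) twisted_average_commutant[OF assms(2,4,5) \<open>0 < m2\<close>]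
      twisted_average_range[OF assms(2,5) \<open>0 < m2\<close>] by blast
  then have "cesaro (\<lambda>n. (U ^^ (n * m1)) (A ((U ^^ (n * m2)) \<xi>))) \<longlonglongrightarrow>
      (cinner (A \<Omega>) \<Omega> * cinner \<xi> \<Omega>) *\<^sub>C \<Omega>"
    by (rule twisted_average.tendsto)
  then show "(\<lambda>N. complex_of_real (1 / real N) *\<^sub>C (\<Sum>n<N. (U ^^ (n * m1)) (A ((U ^^ (n * m2)) \<xi>))))
      \<longlonglongrightarrow> (cinner (A \<Omega>) \<Omega> * cinner \<xi> \<Omega>) *\<^sub>C \<Omega>"
    by (simp only: cesaro_def[abs_def] scaleC_of_real)
qed

end
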